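(* Consider a sequence (indexed by the sample size $n\to\infty$) of linear models $\mathbf{y}=\mathbf{X}\boldsymbol{\beta}+\boldsymbol{\epsilon}$ as described in the context, satisfying assumptions (A1)–(A6) of the context. Suppose moreover that the following condition holds: there exists $C>0$ such that $|(\Pi_j X_j)^T X_k|\le C n^{-\gamma}$ for all $j\in\{1,\dots,p\}$ and all $k\in\mathcal{S}\setminus\mathcal{C}_j$ with $k\neq j$. Then $\mathbb{P}(\mathcal{E}_1)\to 1$, where $$\mathcal{E}_1=\Big\{\frac{|c_k^*(s_k)|}{\min_{j\in\mathcal{S}}|c_j^*(s_j)|}\to 0 \text{ for all } k\notin\mathcal{S}\Big\},$$ and this holds regardless of the choice of rescaling factor, i.e. both with $s_j=\lambda_j$ for all $j$ and with $s_j=\Lambda_j$ for all $j$. Moreover, on the event $\mathcal{E}_1$ the following hold (for either rescaling factor unless stated otherwise): (i) $n^{\mu}\, c_j^*\to 0$ for $j\notin\mathcal{S}$; (ii) $n^{\mu}\,|c_j^*|\to\infty$ for $j\in\mathcal{S}$; (iii) with the rescaling factor $\lambda_j$, $c_j^*(\lambda_j)/\beta_j\to 1$ whenever $\beta_j\neq 0$.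
   Context: Model: $\mathbf{y}=\mathbf{X}\boldsymbol{\beta}+\boldsymbol{\epsilon}$, where $\mathbf{y}\in\mathbb{R}^n$, $\mathbf{X}=(X_1,\dots,X_p)$ is an $n\times p$ design matrix whose columns satisfy $\|X_j\|_2=1$, $\boldsymbol{\beta}\in\mathbb{R}^p$, and $\epsilon_1,\dots,\epsilon_n$ are i.i.d. $\mathcal{N}(0,\sigma^2/n)$ with $\sigma^2<\infty$. The quantities $p,\mathbf{X},\boldsymbol{\beta}$ may depend on $n$. Let $\mathcal{S}=\{j:\beta_j\neq0\}$, $c_{j,k}=X_j^TX_k$, and for $\mathcal{D}\subseteq\{1,\dots,p\}$ let $\mathbf{X}_\mathcal{D}$, $\boldsymbol{\beta}_\mathcal{D}$ be the corresponding column submatrix / subvector. Given a threshold $\pi_n\in(0,1)$, let $\mathcal{C}_j=\{k\neq j: |c_{j,k}|>\pi_n\}$, let $\Pi_j$ be the orthogonal projection onto the span of $\{X_k:k\in\mathcal{C}_j\}$ (the zero matrix if $\mathcal{C}_j=\emptyset$), $X_j^*=(\mathbf{I}_n-\Pi_j)X_j$, $a_j=\|\Pi_jX_j\|_2^2/\|X_j\|_2^2$, $a_{jy}=\|\Pi_j\mathbf{y}\|_2^2/\|\mathbf{y}\|_2^2$, and the rescaling factors $\lambda_j=1-a_j$ and $\Lambda_j=\{(1-a_j)(1-a_{jy})\}^{1/2}$. The tilted correlation with rescaling factor $s_j$ is $c_j^*(s_j)=s_j^{-1}X_j^{*T}\mathbf{y}$; $c_j^*$ denotes it for either choice. Assumptions: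 (A1) $|\mathcal{S}|=O(n^{\delta})$ for some $\delta\in[0,1/2)$. (A2) $\log p=O(n^{\theta})$ with $\theta\in[0,1-2\gamma)$ for some $\gamma\in(\delta,1/2)$. (A3) With this $\gamma$, $\pi_n=C_1n^{-\gamma}$ for some $C_1>0$, and there is $C>0$ with $|\mathcal{C}_j|\le Cn^{\xi}$ uniformly in $j$, where $\xi\in[0,2(\gamma-\delta))$. (A4) $\max_{j\in\mathcal{S}}|\beta_j|<M$ for some $M\in(0,\infty)$ and $n^{\mu}\min_{j\in\mathcal{S}}|\beta_j|\to\infty$ for some $\mu\in[0,\gamma-\delta-\xi/2)$. (A5) There is $\alpha\in(0,1)$ with $1-a_j>\alpha$ for all $j$. (A6) For every $j$ with $\mathcal{S}\not\subseteq\mathcal{C}_j$, $n^{\kappa}\|(\mathbf{I}_n-\Pi_j)\mathbf{X}_\mathcal{S}\boldsymbol{\beta}_\mathcal{S}\|_2^2/\|\mathbf{X}_\mathcal{S}\boldsymbol{\beta}_\mathcal{S}\|_2^2\to\infty$, for some $\kappa$ with $\kappa/2+\mu\in[0,\gamma-\delta-\xi/2)$. *)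

theory Defs
  imports "HOL-Probability.Probability" "HOL-Library.Landau_Symbols"
begin

(* Vectors in R^n are represented as functions nat => real, only coordinates i < n matter.
   An n x p design matrix is a function X :: nat => nat => real, X i j = entry in row i, column j. *)

definition vinner :: "nat \<Rightarrow> (nat \<Rightarrow> real) \<Rightarrow> (nat \<Rightarrow> real) \<Rightarrow> real" where
  "vinner n u v = (\<Sum>i<n. u i * v i)"

definition col :: "(nat \<Rightarrow> nat \<Rightarrow> real) \<Rightarrow> nat \<Rightarrow> nat \<Rightarrow> real" where
  "col X k = (\<lambda>i. X i k)"

definition colspan :: "nat \<Rightarrow> (nat \<Rightarrow> nat \<Rightarrow> real) \<Rightarrow> nat set \<Rightarrow> (nat \<Rightarrow> real) set" where
  "colspan n X K = {w. \<exists>a. w = (\<lambda>i. if i < n then (\<Sum>k\<in>K. a k * X i k) else 0)}"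

definition proj :: "nat \<Rightarrow> (nat \<Rightarrow> nat \<Rightarrow> real) \<Rightarrow> nat set \<Rightarrow> (nat \<Rightarrow> real) \<Rightarrow> nat \<Rightarrow> real" where
  "proj n X K v = (THE w. w \<in> colspan n X K \<and>
      (\<forall>k\<in>K. vinner n (\<lambda>i. v i - w i) (col X k) = 0))"

definition corr :: "nat \<Rightarrow> (nat \<Rightarrow> nat \<Rightarrow> real) \<Rightarrow> nat \<Rightarrow> nat \<Rightarrow> real" where
  "corr n X j k = vinner n (col X j) (col X k)"

definition Cset :: "nat \<Rightarrow> nat \<Rightarrow> (nat \<Rightarrow> nat \<Rightarrow> real) \<Rightarrow> real \<Rightarrow> nat \<Rightarrow> nat set" where
  "Cset n p X thr j = {k. k < p \<and> k \<noteq> j \<and> thr < \<bar>corr n X j k\<bar>}"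

definition PiX :: "nat \<Rightarrow> nat \<Rightarrow> (nat \<Rightarrow> nat \<Rightarrow> real) \<Rightarrow> real \<Rightarrow> nat \<Rightarrow> nat \<Rightarrow> real" where
  "PiX n p X thr j = proj n X (Cset n p X thr j) (col X j)"

definition Xstar :: "nat \<Rightarrow> nat \<Rightarrow> (nat \<Rightarrow> nat \<Rightarrow> real) \<Rightarrow> real \<Rightarrow> nat \<Rightarrow> nat \<Rightarrow> real" where
  "Xstar n p X thr j = (\<lambda>i. if i < n then X i j - PiX n p X thr j i else 0)"

definition a_coef :: "nat \<Rightarrow> nat \<Rightarrow> (nat \<Rightarrow> nat \<Rightarrow> real) \<Rightarrow> real \<Rightarrow> nat \<Rightarrow> real" where
  "a_coef n p X thr j = vinner n (PiX n p X thr j) (PiX n p X thr j) / vinner n (col X j) (col X j)"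

definition a_y :: "nat \<Rightarrow> nat \<Rightarrow> (nat \<Rightarrow> nat \<Rightarrow> real) \<Rightarrow> real \<Rightarrow> (nat \<Rightarrow> real) \<Rightarrow> nat \<Rightarrow> real" where
  "a_y n p X thr y j =
     vinner n (proj n X (Cset n p X thr j) y) (proj n X (Cset n p X thr j) y) / vinner n y y"

datatype rescale = Lam | BigLam

definition resc :: "rescale \<Rightarrow> nat \<Rightarrow> nat \<Rightarrow> (nat \<Rightarrow> nat \<Rightarrow> real) \<Rightarrow> real \<Rightarrow> (nat \<Rightarrow> real) \<Rightarrow> nat \<Rightarrow> real" where
  "resc s n p X thr y j = (case s of
      Lam \<Rightarrow> 1 - a_coef n p X thr j
    | BigLam \<Rightarrow> sqrt ((1 - a_coef n p X thr j) * (1 - a_y n p X thr y j)))"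

definition tilted :: "rescale \<Rightarrow> nat \<Rightarrow> nat \<Rightarrow> (nat \<Rightarrow> nat \<Rightarrow> real) \<Rightarrow> real \<Rightarrow> (nat \<Rightarrow> real) \<Rightarrow> nat \<Rightarrow> real" where
  "tilted s n p X thr y j = vinner n (Xstar n p X thr j) y / resc s n p X thr y j"

definition supp :: "nat \<Rightarrow> (nat \<Rightarrow> real) \<Rightarrow> nat set" where
  "supp p b = {j. j < p \<and> b j \<noteq> 0}"

definition signal :: "nat \<Rightarrow> nat \<Rightarrow> (nat \<Rightarrow> nat \<Rightarrow> real) \<Rightarrow> (nat \<Rightarrow> real) \<Rightarrow> nat \<Rightarrow> real" where
  "signal n p X b = (\<lambda>i. if i < n then (\<Sum>j\<in>supp p b. X i j * b j) else 0)"

definition resp :: "nat \<Rightarrow> nat \<Rightarrow> (nat \<Rightarrow> nat \<Rightarrow> real) \<Rightarrow> (nat \<Rightarrow> real) \<Rightarrow> (nat \<Rightarrow> real) \<Rightarrow> nat \<Rightarrow> real" where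
  "resp n p X b e = (\<lambda>i. if i < n then (\<Sum>j<p. X i j * b j) + e i else 0)"

end

theory Submission
  imports Defs
begin

text \<open>
  The noise enters the tilted correlations only through the Gaussian linear forms
  \<open>\<langle>u, \<epsilon>\<rangle>\<close> for finitely many test vectors \<open>u\<close> (the \<open>X\<^sub>j\<^sup>*\<close>, an orthonormal basis of each span of
  \<open>{X\<^sub>k : k \<in> \<C>\<^sub>j}\<close>, and the residuals \<open>(I - \<Pi>\<^sub>j) X\<^sub>\<S> \<beta>\<^sub>\<S>\<close>) and through \<open>\<parallel>\<epsilon>\<parallel>\<^sup>2\<close>. Call the noise
  typical if every such form is at most \<open>\<eta>\<^sub>n \<parallel>u\<parallel>\<close>, where \<open>\<eta>\<^sub>n = n\<^bsup>(\<tau>-1)/2\<^esup>\<close> for some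
  \<open>\<theta> < \<tau> < 1 - 2\<gamma>\<close>, and \<open>\<sigma>\<^sup>2/4 \<le> \<parallel>\<epsilon>\<parallel>\<^sup>2 \<le> 4\<sigma>\<^sup>2\<close>. Chernoff bounds and a union bound over the
  \<open>O(n\<^sup>\<xi> p)\<close> test vectors show that typical noise has probability tending to one.

  For typical noise, \<open>X\<^sub>j\<^sup>*\<^sup>T y\<close> differs from \<open>\<beta>\<^sub>j (1 - a\<^sub>j)\<close> (zero for \<open>j \<notin> \<S>\<close>) by at most
  \<open>|\<S>| M (\<pi>\<^sub>n + C\<^sub>2 n\<^sup>-\<^sup>\<gamma>) + \<eta>\<^sub>n\<close>: \<open>X\<^sub>j\<^sup>*\<close> is orthogonal to the columns in \<open>\<C>\<^sub>j\<close> and has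
  inner product at most \<open>\<pi>\<^sub>n + C\<^sub>2 n\<^sup>-\<^sup>\<gamma>\<close> with the other columns of the support. The factor
  \<open>\<lambda>\<^sub>j\<close> exceeds \<open>\<alpha>\<close>, and \<open>\<Lambda>\<^sub>j\<close> is bounded below by a constant, or by a constant times
  \<open>n\<^sup>-\<^sup>\<kappa>\<^sup>/\<^sup>2\<close> via (A6) when \<open>\<S> \<not>\<subseteq> \<C>\<^sub>j\<close>. The exponent conditions make all these error
  terms \<open>o(n\<^sup>-\<^sup>\<mu>)\<close>, while \<open>n\<^sup>\<mu> min\<^sub>j\<^sub>\<in>\<^sub>\<S> |\<beta>\<^sub>j| \<rightarrow> \<infinity>\<close>; this gives (i)--(iii) and the ratio bound.
\<close>


section \<open>Orthogonal projections onto column spans\<close>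

definition lin_comb :: "(nat \<Rightarrow> real) set \<Rightarrow> ((nat \<Rightarrow> real) \<Rightarrow> real) \<Rightarrow> nat \<Rightarrow> real" where
  "lin_comb Q c = (\<lambda>i. \<Sum>q\<in>Q. c q * q i)"

definition orth_proj :: "nat \<Rightarrow> (nat \<Rightarrow> real) set \<Rightarrow> (nat \<Rightarrow> real) \<Rightarrow> nat \<Rightarrow> real" where
  "orth_proj n Q v = lin_comb Q (\<lambda>q. vinner n v q)"

definition orthonormal :: "nat \<Rightarrow> (nat \<Rightarrow> real) set \<Rightarrow> bool" where
  "orthonormal n Q \<longleftrightarrow> (\<forall>q\<in>Q. \<forall>q'\<in>Q. vinner n q q' = (if q = q' then 1 else 0))"

lemma vinner_sym: "vinner n u v = vinner n v u"
  by (simp add: vinner_def mult.commute)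

lemma vinner_cong:
  "(\<And>i. i < n \<Longrightarrow> u i = u' i) \<Longrightarrow> (\<And>i. i < n \<Longrightarrow> v i = v' i) \<Longrightarrow> vinner n u v = vinner n u' v'"
  by (simp add: vinner_def)

lemma vinner_diff_left: "vinner n (\<lambda>i. u i - w i) v = vinner n u v - vinner n w v"
  by (simp add: vinner_def algebra_simps sum_subtractf)

lemma vinner_add_left: "vinner n (\<lambda>i. u i + w i) v = vinner n u v + vinner n w v"
  by (simp add: vinner_def algebra_simps sum.distrib)

lemma vinner_diff_right: "vinner n v (\<lambda>i. u i - w i) = vinner n v u - vinner n v w"
  by (simp add: vinner_def algebra_simps sum_subtractf)

lemma vinner_add_right: "vinner n v (\<lambda>i. u i + w i) = vinner n v u + vinner n v w"
  by (simp add: vinner_def algebra_simps sum.distrib)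

lemma vinner_scale_left: "vinner n (\<lambda>i. c * u i) v = c * vinner n u v"
  by (simp add: vinner_def sum_distrib_left algebra_simps)

lemma vinner_scale_right: "vinner n v (\<lambda>i. c * u i) = c * vinner n v u"
  by (simp add: vinner_def sum_distrib_left algebra_simps)

lemma vinner_lin_comb_left: "vinner n (lin_comb Q c) w = (\<Sum>q\<in>Q. c q * vinner n q w)"
  unfolding vinner_def lin_comb_def
  by (simp add: sum_distrib_left sum_distrib_right mult.assoc) (rule sum.swap)

lemma vinner_lin_comb_right: "vinner n w (lin_comb Q c) = (\<Sum>q\<in>Q. c q * vinner n w q)"
  using vinner_lin_comb_left[of n Q c w] by (simp add: vinner_sym)

lemma vinner_sum_right: "vinner n w (\<lambda>i. \<Sum>l\<in>L. c l * u l i) = (\<Sum>l\<in>L. c l * vinner n w (u l))"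
  unfolding vinner_def by (simp add: sum_distrib_left mult_ac) (rule sum.swap)

lemma vinner_self_nonneg: "0 \<le> vinner n u u"
  by (simp add: vinner_def sum_nonneg)

lemma vinner_self_eq_0: "vinner n u u = 0 \<longleftrightarrow> (\<forall>i<n. u i = 0)"
  unfolding vinner_def by (subst sum_nonneg_eq_0_iff) auto

lemma vinner_lin_comb_orthonormal:
  assumes "orthonormal n Q" "finite Q" "q \<in> Q"
  shows "vinner n (lin_comb Q c) q = c q"
proof -
  have "(\<Sum>q'\<in>Q. c q' * vinner n q' q) = (\<Sum>q'\<in>Q. if q' = q then c q else 0)"
    using assms by (intro sum.cong) (auto simp: orthonormal_def)
  then show ?thesis
    using assms by (simp add: vinner_lin_comb_left)
qed

lemma vinner_orth_proj_orthonormal: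
  assumes "orthonormal n Q" "finite Q" "q \<in> Q"
  shows "vinner n (orth_proj n Q v) q = vinner n v q"
  using assms unfolding orth_proj_def by (rule vinner_lin_comb_orthonormal)

lemma vinner_orth_proj_self:
  assumes "orthonormal n Q" "finite Q"
  shows "vinner n (orth_proj n Q v) (orth_proj n Q v) = (\<Sum>q\<in>Q. (vinner n v q)\<^sup>2)"
  using assms unfolding orth_proj_def
  by (simp add: vinner_lin_comb_right vinner_lin_comb_orthonormal power2_eq_square)

lemma vinner_orth_resid_orthonormal:
  assumes "orthonormal n Q" "finite Q" "q \<in> Q"
  shows "vinner n (\<lambda>i. v i - orth_proj n Q v i) q = 0"
  using assms by (simp add: vinner_diff_left vinner_orth_proj_orthonormal)

lemma vinner_orth_resid_orth_proj:
  assumes "orthonormal n Q" "finite Q"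
  shows "vinner n (\<lambda>i. v i - orth_proj n Q v i) (orth_proj n Q w) = 0"
  using assms unfolding orth_proj_def[of n Q w]
  by (simp add: vinner_lin_comb_right vinner_orth_resid_orthonormal)

lemma vinner_orth_resid_eq:
  assumes "orthonormal n Q" "finite Q"
  shows "vinner n (\<lambda>i. v i - orth_proj n Q v i) w =
    vinner n (\<lambda>i. v i - orth_proj n Q v i) (\<lambda>i. w i - orth_proj n Q w i)"
  using vinner_orth_resid_orth_proj[OF assms, of v w] by (simp add: vinner_diff_right)

lemma pythagoras_orth_proj:
  assumes "orthonormal n Q" "finite Q"
  shows "vinner n v v = vinner n (orth_proj n Q v) (orth_proj n Q v)
    + vinner n (\<lambda>i. v i - orth_proj n Q v i) (\<lambda>i. v i - orth_proj n Q v i)"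
proof -
  let ?r = "\<lambda>i. v i - orth_proj n Q v i"
  have v: "vinner n v v = vinner n (\<lambda>i. orth_proj n Q v i + ?r i) (\<lambda>i. orth_proj n Q v i + ?r i)"
    by (rule vinner_cong) auto
  have "vinner n ?r (orth_proj n Q v) = 0"
    using assms by (rule vinner_orth_resid_orth_proj)
  moreover from this have "vinner n (orth_proj n Q v) ?r = 0"
    by (simp only: vinner_sym[of n ?r])
  ultimately show ?thesis
    unfolding v vinner_add_left vinner_add_right by simp
qed

lemma vinner_orth_proj_self_le:
  assumes "orthonormal n Q" "finite Q" "\<And>q. q \<in> Q \<Longrightarrow> \<bar>vinner n v q\<bar> \<le> h"
  shows "vinner n (orth_proj n Q v) (orth_proj n Q v) \<le> real (card Q) * h\<^sup>2"
proof -
  have "(\<Sum>q\<in>Q. (vinner n v q)\<^sup>2) \<le> (\<Sum>q\<in>Q. h\<^sup>2)"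
    using assms(3) by (intro sum_mono) (metis abs_ge_zero power2_abs power_mono)
  then show ?thesis
    using vinner_orth_proj_self[OF assms(1,2)] by simp
qed

lemma orth_proj_cong:
  assumes "\<And>i. i < n \<Longrightarrow> v i = v' i"
  shows "orth_proj n Q v = orth_proj n Q v'"
proof -
  have "\<And>q. vinner n v q = vinner n v' q"
    by (rule vinner_cong) (use assms in auto)
  then show ?thesis
    unfolding orth_proj_def lin_comb_def by simp
qed

lemma orth_proj_add: "orth_proj n Q (\<lambda>i. u i + v i) i = orth_proj n Q u i + orth_proj n Q v i"
  unfolding orth_proj_def lin_comb_def by (simp add: vinner_add_left algebra_simps sum.distrib)

lemma orth_proj_insert:
  assumes "finite Q" "q \<notin> Q"
  shows "orth_proj n (insert q Q) v i = vinner n v q * q i + orth_proj n Q v i"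
  using assms unfolding orth_proj_def lin_comb_def by simp

lemma orthonormal_insert:
  assumes "orthonormal n Q" "vinner n q q = 1" "\<And>q'. q' \<in> Q \<Longrightarrow> vinner n q q' = 0"
  shows "q \<notin> Q" "orthonormal n (insert q Q)"
proof -
  show "q \<notin> Q"
    using assms(2,3) by force
  show "orthonormal n (insert q Q)"
    unfolding orthonormal_def
  proof (intro ballI)
    fix u v
    assume "u \<in> insert q Q" "v \<in> insert q Q"
    then consider "u = q" "v = q" | "u = q" "v \<in> Q" | "u \<in> Q" "v = q" | "u \<in> Q" "v \<in> Q"
      by auto
    then show "vinner n u v = (if u = v then 1 else 0)"
    proof cases
      case 3
      then show ?thesis
        using assms(3)[of u] \<open>q \<notin> Q\<close> by (auto simp: vinner_sym[of n u q])
    next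
      case 4
      then show ?thesis
        using assms(1) by (simp add: orthonormal_def)
    qed (use assms(2,3) \<open>q \<notin> Q\<close> in auto)
  qed
qed

lemma colspan_iff:
  "w \<in> colspan n X K \<longleftrightarrow> (\<forall>i. n \<le> i \<longrightarrow> w i = 0) \<and> (\<exists>a. \<forall>i<n. w i = (\<Sum>k\<in>K. a k * X i k))"
proof
  assume "w \<in> colspan n X K"
  then show "(\<forall>i. n \<le> i \<longrightarrow> w i = 0) \<and> (\<exists>a. \<forall>i<n. w i = (\<Sum>k\<in>K. a k * X i k))"
    by (auto simp: colspan_def)
next
  assume "(\<forall>i. n \<le> i \<longrightarrow> w i = 0) \<and> (\<exists>a. \<forall>i<n. w i = (\<Sum>k\<in>K. a k * X i k))"
  then obtain a where "\<forall>i<n. w i = (\<Sum>k\<in>K. a k * X i k)" "\<forall>i. n \<le> i \<longrightarrow> w i = 0"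
    by blast
  then have "w = (\<lambda>i. if i < n then (\<Sum>k\<in>K. a k * X i k) else 0)"
    by (auto simp: fun_eq_iff not_less)
  then show "w \<in> colspan n X K"
    by (auto simp: colspan_def)
qed

lemma colspan_lin_comb:
  assumes "finite Q" "Q \<subseteq> colspan n X K"
  shows "lin_comb Q c \<in> colspan n X K"
proof -
  obtain A where A: "\<And>q i. q \<in> Q \<Longrightarrow> i < n \<Longrightarrow> q i = (\<Sum>k\<in>K. A q k * X i k)"
    using assms(2) unfolding colspan_iff subset_iff by metis
  have "lin_comb Q c i = (\<Sum>k\<in>K. (\<Sum>q\<in>Q. c q * A q k) * X i k)" if "i < n" for i
  proof -
    have "lin_comb Q c i = (\<Sum>q\<in>Q. c q * (\<Sum>k\<in>K. A q k * X i k))"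
      unfolding lin_comb_def using A that by (intro sum.cong) auto
    also have "\<dots> = (\<Sum>q\<in>Q. \<Sum>k\<in>K. c q * A q k * X i k)"
      by (simp add: sum_distrib_left mult.assoc)
    finally
    show ?thesis
      by (simp add: sum.swap[of _ Q] sum_distrib_right)
  qed
  moreover have "lin_comb Q c i = 0" if "n \<le> i" for i
    using assms(2) that by (auto simp: lin_comb_def colspan_iff intro!: sum.neutral)
  ultimately show ?thesis
    by (auto simp: colspan_iff)
qed

lemma colspan_col:
  assumes "finite K" "k \<in> K"
  shows "(\<lambda>i. if i < n then X i k else 0) \<in> colspan n X K"
proof -
  have "X i k = (\<Sum>k'\<in>K. (if k' = k then 1 else 0) * X i k')" for i
  proof -
    have "(\<Sum>k'\<in>K. (if k' = k then 1 else 0) * X i k') = (\<Sum>k'\<in>K. if k' = k then X i k' else 0)"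
      by (intro sum.cong) auto
    then show ?thesis
      using assms by simp
  qed
  then show ?thesis
    by (auto simp: colspan_iff)
qed

lemma colspan_comb:
  assumes "u \<in> colspan n X K" "w \<in> colspan n X K"
  shows "(\<lambda>i. c * u i + d * w i) \<in> colspan n X K"
proof -
  obtain a b where "\<forall>i<n. u i = (\<Sum>k\<in>K. a k * X i k)" "\<forall>i<n. w i = (\<Sum>k\<in>K. b k * X i k)"
    using assms by (auto simp: colspan_iff)
  then have "\<forall>i<n. c * u i + d * w i = (\<Sum>k\<in>K. (c * a k + d * b k) * X i k)"
    by (simp add: sum_distrib_left sum.distrib algebra_simps)
  with assms show ?thesis
    by (auto simp: colspan_iff)
qed

lemma colspan_mono:
  assumes "finite K" "K0 \<subseteq> K"
  shows "colspan n X K0 \<subseteq> colspan n X K"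
proof
  fix w
  assume "w \<in> colspan n X K0"
  then obtain a where a: "\<forall>i<n. w i = (\<Sum>k\<in>K0. a k * X i k)" and "\<forall>i. n \<le> i \<longrightarrow> w i = 0"
    by (auto simp: colspan_iff)
  moreover have "(\<Sum>k\<in>K. (if k \<in> K0 then a k else 0) * X i k) = (\<Sum>k\<in>K0. a k * X i k)" for i
  proof -
    have "(\<Sum>k\<in>K. (if k \<in> K0 then a k else 0) * X i k) = (\<Sum>k\<in>K. if k \<in> K0 then a k * X i k else 0)"
      by (intro sum.cong) auto
    also have "\<dots> = (\<Sum>k\<in>K \<inter> K0. a k * X i k)"
      using assms by (simp add: sum.inter_restrict)
    finally show ?thesis
      using assms by (simp add: Int_absorb1)
  qed
  ultimately show "w \<in> colspan n X K"
    unfolding colspan_iff by (intro conjI exI[of _ "\<lambda>k. if k \<in> K0 then a k else 0"]) auto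
qed

lemma gram_schmidt_step:
  assumes Q: "finite Q" "orthonormal n Q"
    and r_def: "r = (\<lambda>i. v i - orth_proj n Q v i)" and r: "vinner n r r \<noteq> 0"
  defines "q \<equiv> \<lambda>i. (1 / sqrt (vinner n r r)) * r i"
  shows "q \<notin> Q" and "orthonormal n (insert q Q)"
    and "\<And>i. i < n \<Longrightarrow> orth_proj n (insert q Q) v i = v i"
    and "\<And>w i. (\<And>i. i < n \<Longrightarrow> orth_proj n Q w i = w i) \<Longrightarrow> i < n \<Longrightarrow> orth_proj n (insert q Q) w i = w i"
proof -
  have r_pos: "vinner n r r > 0"
    using r vinner_self_nonneg[of n r] by linarith
  have q_unit: "vinner n q q = 1"
    unfolding q_def vinner_scale_left vinner_scale_right using r_pos by (simp add: field_simps)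
  have q_orth: "vinner n q q' = 0" if "q' \<in> Q" for q'
    unfolding q_def r_def vinner_scale_left using vinner_orth_resid_orthonormal[OF Q(2,1) that] by simp
  show q_notin: "q \<notin> Q" and "orthonormal n (insert q Q)"
    using orthonormal_insert[OF Q(2) q_unit q_orth] by simp_all
  have proj_orth_q: "vinner n (orth_proj n Q w) q = 0" for w
    unfolding orth_proj_def vinner_lin_comb_left using q_orth by (simp add: vinner_sym)
  have "vinner n v q = vinner n r q"
    using proj_orth_q by (simp add: r_def vinner_diff_left)
  also have "\<dots> = sqrt (vinner n r r)"
    unfolding q_def vinner_scale_right using r_pos by (simp add: real_div_sqrt)
  finally show "orth_proj n (insert q Q) v i = v i" for i
    using orth_proj_insert[OF Q(1) q_notin] r_pos by (simp add: q_def r_def)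
  show "orth_proj n (insert q Q) w i = w i" if w: "\<And>i. i < n \<Longrightarrow> orth_proj n Q w i = w i" and "i < n" for w i
  proof -
    have "vinner n w q = vinner n (orth_proj n Q w) q"
      by (rule vinner_cong) (simp_all add: w)
    then show ?thesis
      using orth_proj_insert[OF Q(1) q_notin] proj_orth_q w \<open>i < n\<close> by simp
  qed
qed

lemma gram_schmidt:
  assumes "finite K"
  shows "\<exists>Q. finite Q \<and> card Q \<le> card K \<and> orthonormal n Q \<and> Q \<subseteq> colspan n X K \<and>
     (\<forall>k\<in>K. \<forall>i<n. X i k = orth_proj n Q (col X k) i)"
  using assms
proof (induction K rule: finite_induct)
  case empty
  show ?case
    by (rule exI[of _ "{}"]) (auto simp: orthonormal_def)
next
  case (insert k K)
  then obtain Q where Q: "finite Q" "card Q \<le> card K" "orthonormal n Q" "Q \<subseteq> colspan n X K"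
    "\<forall>l\<in>K. \<forall>i<n. X i l = orth_proj n Q (col X l) i"
    by blast
  have fin: "finite (insert k K)"
    using insert by simp
  have Q_sub: "Q \<subseteq> colspan n X (insert k K)"
    using Q(4) colspan_mono[OF fin, of K] by auto
  define xk where "xk = (\<lambda>i. if i < n then X i k else 0)"
  define r where "r = (\<lambda>i. xk i - orth_proj n Q xk i)"
  have proj_col: "orth_proj n Q' (col X l) = orth_proj n Q' (\<lambda>i. if i < n then X i l else 0)" for Q' l
    by (rule orth_proj_cong) (simp add: col_def)
  have "xk \<in> colspan n X (insert k K)"
    unfolding xk_def using fin by (rule colspan_col) simp
  moreover have "orth_proj n Q xk \<in> colspan n X (insert k K)"
    unfolding orth_proj_def using Q(1) Q_sub by (rule colspan_lin_comb)
  ultimately have r_sp: "(\<lambda>i. c * r i) \<in> colspan n X (insert k K)" for c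
    using colspan_comb[of xk n X "insert k K" "orth_proj n Q xk" c "-c"]
    by (simp add: r_def algebra_simps)
  show ?case
  proof (cases "vinner n r r = 0")
    case True
    then have "\<forall>i<n. r i = 0"
      by (simp add: vinner_self_eq_0)
    then show ?thesis
      using Q Q_sub insert proj_col[of Q k] by (intro exI[of _ Q]) (auto simp: r_def xk_def)
  next
    case False
    define q where "q = (\<lambda>i. (1 / sqrt (vinner n r r)) * r i)"
    note step = gram_schmidt_step[OF Q(1,3) r_def False, folded q_def]
    have "X i l = orth_proj n (insert q Q) (col X l) i" if "l \<in> insert k K" "i < n" for l i
    proof (cases "l = k")
      case True
      then show ?thesis
        using step(3)[of i] proj_col[of "insert q Q" k] \<open>i < n\<close> by (simp add: xk_def)
    next
      case False
      then have "\<forall>i<n. orth_proj n Q (col X l) i = col X l i"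
        using that Q(5) by (simp add: col_def)
      then show ?thesis
        using step(4)[of "col X l" i] \<open>i < n\<close> by (simp add: col_def)
    qed
    moreover have "card (insert q Q) \<le> card (insert k K)"
      using Q(1,2) step(1) insert by simp
    moreover have "q \<in> colspan n X (insert k K)"
      unfolding q_def by (rule r_sp)
    ultimately show ?thesis
      using Q Q_sub step(2) by (intro exI[of _ "insert q Q"]) auto
  qed
qed

definition gs_basis :: "nat \<Rightarrow> (nat \<Rightarrow> nat \<Rightarrow> real) \<Rightarrow> nat set \<Rightarrow> (nat \<Rightarrow> real) set" where
  "gs_basis n X K = (SOME Q. finite Q \<and> card Q \<le> card K \<and> orthonormal n Q \<and> Q \<subseteq> colspan n X K \<and>
     (\<forall>k\<in>K. \<forall>i<n. X i k = orth_proj n Q (col X k) i))"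

lemma
  assumes "finite K"
  shows finite_gs_basis: "finite (gs_basis n X K)"
    and card_gs_basis_le: "card (gs_basis n X K) \<le> card K"
    and orthonormal_gs_basis: "orthonormal n (gs_basis n X K)"
    and gs_basis_subset_colspan: "gs_basis n X K \<subseteq> colspan n X K"
    and orth_proj_gs_basis_col: "\<forall>k\<in>K. \<forall>i<n. X i k = orth_proj n (gs_basis n X K) (col X k) i"
  using someI_ex[OF gram_schmidt[OF assms, of n X]] unfolding gs_basis_def by auto

lemma proj_eq_orth_proj:
  assumes "finite K" "finite Q" "orthonormal n Q" "Q \<subseteq> colspan n X K"
    "\<forall>k\<in>K. \<forall>i<n. X i k = orth_proj n Q (col X k) i"
  shows "proj n X K v = orth_proj n Q v"
  unfolding proj_def
proof (rule the_equality)
  have "orth_proj n Q v \<in> colspan n X K"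
    unfolding orth_proj_def using assms by (intro colspan_lin_comb)
  moreover have "vinner n (\<lambda>i. v i - orth_proj n Q v i) (col X k) = 0" if "k \<in> K" for k
  proof -
    have "vinner n (\<lambda>i. v i - orth_proj n Q v i) (col X k) =
        vinner n (\<lambda>i. v i - orth_proj n Q v i) (orth_proj n Q (col X k))"
      by (rule vinner_cong) (use assms that in \<open>auto simp: col_def\<close>)
    then show ?thesis
      using assms by (simp add: vinner_orth_resid_orth_proj)
  qed
  ultimately show "orth_proj n Q v \<in> colspan n X K \<and>
      (\<forall>k\<in>K. vinner n (\<lambda>i. v i - orth_proj n Q v i) (col X k) = 0)"
    by blast
  fix w
  assume w: "w \<in> colspan n X K \<and> (\<forall>k\<in>K. vinner n (\<lambda>i. v i - w i) (col X k) = 0)"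
  define d where "d = (\<lambda>i. 1 * w i + (-1) * orth_proj n Q v i)"
  have "d \<in> colspan n X K"
    unfolding d_def using w \<open>orth_proj n Q v \<in> colspan n X K\<close> by (intro colspan_comb) auto
  then obtain a where a: "\<forall>i<n. d i = (\<Sum>k\<in>K. a k * X i k)" and d_out: "\<forall>i. n \<le> i \<longrightarrow> d i = 0"
    by (auto simp: colspan_iff)
  \<comment> \<open>\<open>d\<close> lies in the column span and is orthogonal to every column, hence vanishes\<close>
  have "vinner n d (col X k) = 0" if "k \<in> K" for k
  proof -
    have "vinner n d (col X k) = vinner n (\<lambda>i. v i - orth_proj n Q v i) (col X k)
        - vinner n (\<lambda>i. v i - w i) (col X k)"
      unfolding d_def vinner_diff_left[symmetric] by (rule vinner_cong) auto
    with w \<open>\<And>k. k \<in> K \<Longrightarrow> vinner n (\<lambda>i. v i - orth_proj n Q v i) (col X k) = 0\<close> that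
    show ?thesis by simp
  qed
  then have "vinner n d d = 0"
    using vinner_cong[of n d d d "\<lambda>i. \<Sum>k\<in>K. a k * col X k i"] a
    by (simp add: vinner_sum_right col_def)
  then show "w = orth_proj n Q v"
    using d_out by (auto simp: d_def fun_eq_iff vinner_self_eq_0) (metis not_less)
qed

lemma proj_eq_orth_proj_gs_basis: "finite K \<Longrightarrow> proj n X K v = orth_proj n (gs_basis n X K) v"
  by (intro proj_eq_orth_proj finite_gs_basis orthonormal_gs_basis gs_basis_subset_colspan
      orth_proj_gs_basis_col)

section \<open>Gaussian tail bounds\<close>

lemma normal_density_exp_quadratic:
  fixes s a b x :: real
  assumes s: "s > 0" and d: "1 - 2 * b * s\<^sup>2 > 0"
  shows "exp (a * x + b * x\<^sup>2) * normal_density 0 s x =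
    (exp (a\<^sup>2 * s\<^sup>2 / (2 * (1 - 2 * b * s\<^sup>2))) / sqrt (1 - 2 * b * s\<^sup>2)) *
    normal_density (a * s\<^sup>2 / (1 - 2 * b * s\<^sup>2)) (s / sqrt (1 - 2 * b * s\<^sup>2)) x"
proof -
  define d where "d = 1 - 2 * b * s\<^sup>2"
  have dp: "d > 0"
    using d by (simp add: d_def)
  \<comment> \<open>completing the square in the exponent\<close>
  have "(x - a * s\<^sup>2 / d)\<^sup>2 / (2 * (s\<^sup>2 / d)) = d * x\<^sup>2 / (2 * s\<^sup>2) - a * x + a\<^sup>2 * s\<^sup>2 / (2 * d)"
    using dp s by (simp add: power2_eq_square field_simps)
  moreover have "d * x\<^sup>2 / (2 * s\<^sup>2) = x\<^sup>2 / (2 * s\<^sup>2) - b * x\<^sup>2"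
    using s unfolding d_def by (simp add: field_simps)
  ultimately have square: "a * x + b * x\<^sup>2 - x\<^sup>2 / (2 * s\<^sup>2) =
      a\<^sup>2 * s\<^sup>2 / (2 * d) - (x - a * s\<^sup>2 / d)\<^sup>2 / (2 * (s\<^sup>2 / d))"
    by linarith
  have "exp (a * x + b * x\<^sup>2) * normal_density 0 s x =
      1 / sqrt (2 * pi * s\<^sup>2) * exp (a * x + b * x\<^sup>2 - x\<^sup>2 / (2 * s\<^sup>2))"
    unfolding normal_density_def diff_conv_add_uminus exp_add by (simp add: mult_ac)
  also have "\<dots> = 1 / sqrt (2 * pi * s\<^sup>2) *
      (exp (a\<^sup>2 * s\<^sup>2 / (2 * d)) * exp (- (x - a * s\<^sup>2 / d)\<^sup>2 / (2 * (s\<^sup>2 / d))))"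
    unfolding square by (simp add: exp_add[symmetric])
  also have "\<dots> = exp (a\<^sup>2 * s\<^sup>2 / (2 * d)) / sqrt d *
      (1 / sqrt (2 * pi * (s / sqrt d)\<^sup>2) * exp (- (x - a * s\<^sup>2 / d)\<^sup>2 / (2 * (s / sqrt d)\<^sup>2)))"
    using dp by (simp add: power_divide real_sqrt_divide)
  finally show ?thesis
    unfolding d_def normal_density_def .
qed

lemma nn_integral_normal_density_exp_quadratic:
  fixes s a b :: real
  assumes s: "s > 0" and d: "1 - 2 * b * s\<^sup>2 > 0"
  shows "(\<integral>\<^sup>+x. ennreal (normal_density 0 s x) * ennreal (exp (a * x + b * x\<^sup>2)) \<partial>lborel) =
    ennreal (exp (a\<^sup>2 * s\<^sup>2 / (2 * (1 - 2 * b * s\<^sup>2))) / sqrt (1 - 2 * b * s\<^sup>2))"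
proof -
  define K where "K = exp (a\<^sup>2 * s\<^sup>2 / (2 * (1 - 2 * b * s\<^sup>2))) / sqrt (1 - 2 * b * s\<^sup>2)"
  have K: "K \<ge> 0"
    using d by (simp add: K_def)
  have "(\<integral>\<^sup>+x. ennreal (normal_density 0 s x) * ennreal (exp (a * x + b * x\<^sup>2)) \<partial>lborel) =
     (\<integral>\<^sup>+x. ennreal K *
        ennreal (normal_density (a * s\<^sup>2 / (1 - 2 * b * s\<^sup>2)) (s / sqrt (1 - 2 * b * s\<^sup>2)) x) \<partial>lborel)"
    using normal_density_exp_quadratic[OF s d, of a] K
    by (intro nn_integral_cong) (simp add: ennreal_mult'[symmetric] K_def mult.commute)
  also have "\<dots> = ennreal K"
    using s d by (subst nn_integral_cmult) (auto simp: nn_integral_eq_integral integrable_normal_density)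
  finally show ?thesis
    by (simp add: K_def)
qed

context prob_space
begin

lemma nn_integral_exp_quadratic_normal:
  assumes D: "distributed M lborel Y (normal_density 0 s)" and s: "s > 0" and d: "1 - 2 * b * s\<^sup>2 > 0"
  shows "(\<integral>\<^sup>+\<omega>. ennreal (exp (a * Y \<omega> + b * (Y \<omega>)\<^sup>2)) \<partial>M) =
    ennreal (exp (a\<^sup>2 * s\<^sup>2 / (2 * (1 - 2 * b * s\<^sup>2))) / sqrt (1 - 2 * b * s\<^sup>2))"
  using distributed_nn_integral[OF D, of "\<lambda>x. ennreal (exp (a * x + b * x\<^sup>2))"]
    nn_integral_normal_density_exp_quadratic[OF s d, of a]
  by simp

lemma nn_integral_exp_quadratic_indep_normal:
  assumes I: "finite I" and ind: "indep_vars (\<lambda>_. borel) X I"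
    and D: "\<And>i. i \<in> I \<Longrightarrow> distributed M lborel (X i) (normal_density 0 s)"
    and s: "s > 0" and d: "1 - 2 * b * s\<^sup>2 > 0"
  shows "(\<integral>\<^sup>+\<omega>. ennreal (exp (\<Sum>i\<in>I. a i * X i \<omega> + b * (X i \<omega>)\<^sup>2)) \<partial>M) =
    ennreal (\<Prod>i\<in>I. exp ((a i)\<^sup>2 * s\<^sup>2 / (2 * (1 - 2 * b * s\<^sup>2))) / sqrt (1 - 2 * b * s\<^sup>2))"
proof -
  have ind': "indep_vars (\<lambda>_. borel) (\<lambda>i \<omega>. ennreal (exp (a i * X i \<omega> + b * (X i \<omega>)\<^sup>2))) I"
    by (rule indep_vars_compose2[OF ind, where Y="\<lambda>i x. ennreal (exp (a i * x + b * x\<^sup>2))"]) simp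
  have "(\<integral>\<^sup>+\<omega>. ennreal (exp (\<Sum>i\<in>I. a i * X i \<omega> + b * (X i \<omega>)\<^sup>2)) \<partial>M) =
      (\<integral>\<^sup>+\<omega>. (\<Prod>i\<in>I. ennreal (exp (a i * X i \<omega> + b * (X i \<omega>)\<^sup>2))) \<partial>M)"
    using I by (intro nn_integral_cong) (simp add: exp_sum prod_ennreal)
  also have "\<dots> = (\<Prod>i\<in>I. \<integral>\<^sup>+\<omega>. ennreal (exp (a i * X i \<omega> + b * (X i \<omega>)\<^sup>2)) \<partial>M)"
    by (rule indep_vars_nn_integral[OF I ind']) simp
  also have "\<dots> = (\<Prod>i\<in>I. ennreal (exp ((a i)\<^sup>2 * s\<^sup>2 / (2 * (1 - 2 * b * s\<^sup>2))) / sqrt (1 - 2 * b * s\<^sup>2)))"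
    by (intro prod.cong refl nn_integral_exp_quadratic_normal D s d)
  also have "\<dots> = ennreal (\<Prod>i\<in>I. exp ((a i)\<^sup>2 * s\<^sup>2 / (2 * (1 - 2 * b * s\<^sup>2))) / sqrt (1 - 2 * b * s\<^sup>2))"
    using d by (intro prod_ennreal) simp
  finally show ?thesis .
qed

lemma prob_quadratic_form_ge:
  assumes I: "finite I" and ind: "indep_vars (\<lambda>_. borel) X I"
    and D: "\<And>i. i \<in> I \<Longrightarrow> distributed M lborel (X i) (normal_density 0 s)"
    and s: "s > 0" and d: "1 - 2 * b * s\<^sup>2 > 0"
  shows "prob {\<omega> \<in> space M. c \<le> (\<Sum>i\<in>I. a i * X i \<omega> + b * (X i \<omega>)\<^sup>2)} \<le>
    exp (- c) * (\<Prod>i\<in>I. exp ((a i)\<^sup>2 * s\<^sup>2 / (2 * (1 - 2 * b * s\<^sup>2))) / sqrt (1 - 2 * b * s\<^sup>2))"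
proof -
  have [measurable]: "X i \<in> borel_measurable M" if "i \<in> I" for i
    using ind that unfolding indep_vars_def by auto
  let ?f = "\<lambda>\<omega>. \<Sum>i\<in>I. a i * X i \<omega> + b * (X i \<omega>)\<^sup>2"
  have "emeasure M {\<omega> \<in> space M. c \<le> ?f \<omega>} \<le>
      ennreal (exp (- 1 * c)) * (\<integral>\<^sup>+\<omega>. ennreal (exp (1 * ?f \<omega>)) * indicator (space M) \<omega> \<partial>M)"
    by (rule Chernoff_ineq_nn_integral_ge) auto
  also have "(\<integral>\<^sup>+\<omega>. ennreal (exp (1 * ?f \<omega>)) * indicator (space M) \<omega> \<partial>M) = (\<integral>\<^sup>+\<omega>. ennreal (exp (?f \<omega>)) \<partial>M)"
    by (intro nn_integral_cong) simp
  also have "\<dots> = ennreal (\<Prod>i\<in>I. exp ((a i)\<^sup>2 * s\<^sup>2 / (2 * (1 - 2 * b * s\<^sup>2))) / sqrt (1 - 2 * b * s\<^sup>2))"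
    by (rule nn_integral_exp_quadratic_indep_normal[OF I ind D s d])
  finally show ?thesis
    using d by (simp add: emeasure_eq_measure ennreal_mult'[symmetric] prod_nonneg)
qed

lemma prob_linear_form_ge:
  assumes I: "finite I" and ind: "indep_vars (\<lambda>_. borel) X I"
    and D: "\<And>i. i \<in> I \<Longrightarrow> distributed M lborel (X i) (normal_density 0 s)"
    and s: "s > 0" and t: "t > 0" and V: "V > 0" and uV: "(\<Sum>i\<in>I. (u i)\<^sup>2) \<le> V"
  shows "prob {\<omega> \<in> space M. t \<le> (\<Sum>i\<in>I. u i * X i \<omega>)} \<le> exp (- t\<^sup>2 / (2 * s\<^sup>2 * V))"
proof -
  \<comment> \<open>the optimal Chernoff parameter\<close>
  define l where "l = t / (s\<^sup>2 * V)"
  have l: "l > 0"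
    using s t V by (simp add: l_def)
  have "{\<omega> \<in> space M. t \<le> (\<Sum>i\<in>I. u i * X i \<omega>)} =
      {\<omega> \<in> space M. l * t \<le> (\<Sum>i\<in>I. (l * u i) * X i \<omega> + 0 * (X i \<omega>)\<^sup>2)}"
    using l by (auto simp: sum_distrib_left[symmetric] mult.assoc)
  then have "prob {\<omega> \<in> space M. t \<le> (\<Sum>i\<in>I. u i * X i \<omega>)} \<le>
      exp (- (l * t)) * (\<Prod>i\<in>I. exp (l\<^sup>2 * s\<^sup>2 / 2 * (u i)\<^sup>2))"
    using prob_quadratic_form_ge[OF I ind D s, of 0 "l * t" "\<lambda>i. l * u i"]
    by (simp add: power_mult_distrib mult_ac)
  also have "\<dots> = exp (- (l * t) + l\<^sup>2 * s\<^sup>2 / 2 * (\<Sum>i\<in>I. (u i)\<^sup>2))"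
    unfolding exp_add sum_distrib_left exp_sum[OF I] ..
  also have "\<dots> \<le> exp (- (l * t) + l\<^sup>2 * s\<^sup>2 / 2 * V)"
    using uV s by (intro exp_mono add_left_mono mult_left_mono) auto
  also have "- (l * t) + l\<^sup>2 * s\<^sup>2 / 2 * V = - t\<^sup>2 / (2 * s\<^sup>2 * V)"
    using s V unfolding l_def by (simp add: field_simps power2_eq_square)
  finally show ?thesis .
qed

end

definition noise_typical :: "nat \<Rightarrow> (nat \<Rightarrow> real) set \<Rightarrow> real \<Rightarrow> real \<Rightarrow> (nat \<Rightarrow> real) \<Rightarrow> bool" where
  "noise_typical n U \<eta> \<sigma> e \<longleftrightarrow>
     (\<forall>u\<in>U. \<bar>vinner n u e\<bar> \<le> \<eta> * sqrt (vinner n u u)) \<and>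
     \<sigma>\<^sup>2 / 4 \<le> vinner n e e \<and> vinner n e e \<le> 4 * \<sigma>\<^sup>2"

context prob_space
begin

lemma prob_vinner_gaussian_gt:
  assumes ind: "indep_vars (\<lambda>_. borel) (\<lambda>i \<omega>. Z \<omega> i) {..<n}"
    and D: "\<And>i. i < n \<Longrightarrow> distributed M lborel (\<lambda>\<omega>. Z \<omega> i) (normal_density 0 s)"
    and s: "s > 0" and \<eta>: "\<eta> > 0"
  shows "prob {\<omega> \<in> space M. \<eta> * sqrt (vinner n u u) < \<bar>vinner n u (Z \<omega>)\<bar>} \<le> 2 * exp (- \<eta>\<^sup>2 / (2 * s\<^sup>2))"
proof (cases "vinner n u u = 0")
  case True
  then have "\<forall>i<n. u i = 0"
    by (simp add: vinner_self_eq_0)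
  then have "vinner n u (Z \<omega>) = 0" for \<omega>
    by (simp add: vinner_def)
  then show ?thesis
    using True by simp
next
  case False
  define V where "V = vinner n u u"
  have V: "V > 0"
    using False vinner_self_nonneg[of n u] by (simp add: V_def)
  have [measurable]: "(\<lambda>\<omega>. Z \<omega> i) \<in> borel_measurable M" if "i \<in> {..<n}" for i
    using ind that unfolding indep_vars_def by auto
  define A where "A c = {\<omega> \<in> space M. \<eta> * sqrt V \<le> (\<Sum>i\<in>{..<n}. (c * u i) * Z \<omega> i)}" for c :: real
  have A_ev: "A c \<in> events" for c
    unfolding A_def by measurable
  have "prob (A c) \<le> exp (- \<eta>\<^sup>2 / (2 * s\<^sup>2))" if "\<bar>c\<bar> = 1" for c
  proof -
    have "c\<^sup>2 = 1"
      using that by (metis power2_abs one_power2)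
    then have "(\<Sum>i\<in>{..<n}. (c * u i)\<^sup>2) = (\<Sum>i\<in>{..<n}. (u i)\<^sup>2)"
      by (simp add: power_mult_distrib)
    then have "(\<Sum>i\<in>{..<n}. (c * u i)\<^sup>2) \<le> V"
      by (simp add: V_def vinner_def power2_eq_square)
    then have "prob (A c) \<le> exp (- (\<eta> * sqrt V)\<^sup>2 / (2 * s\<^sup>2 * V))"
      unfolding A_def using D \<eta> V by (intro prob_linear_form_ge[OF _ ind _ s _ V]) auto
    moreover have "- (\<eta> * sqrt V)\<^sup>2 / (2 * s\<^sup>2 * V) = - \<eta>\<^sup>2 / (2 * s\<^sup>2)"
      using V by (simp add: power_mult_distrib)
    ultimately show ?thesis
      by simp
  qed
  moreover have "{\<omega> \<in> space M. \<eta> * sqrt (vinner n u u) < \<bar>vinner n u (Z \<omega>)\<bar>} \<subseteq> A 1 \<union> A (-1)"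
    by (auto simp: A_def V_def vinner_def sum_negf abs_if)
  then have "prob {\<omega> \<in> space M. \<eta> * sqrt (vinner n u u) < \<bar>vinner n u (Z \<omega>)\<bar>} \<le> prob (A 1) + prob (A (-1))"
    using A_ev by (meson finite_measure_mono measure_Un_le sets.Un order_trans)
  ultimately show ?thesis
    by (smt (verit) abs_minus_cancel abs_one)
qed

lemma prob_ex_vinner_gaussian_gt:
  assumes ind: "indep_vars (\<lambda>_. borel) (\<lambda>i \<omega>. Z \<omega> i) {..<n}"
    and D: "\<And>i. i < n \<Longrightarrow> distributed M lborel (\<lambda>\<omega>. Z \<omega> i) (normal_density 0 s)"
    and s: "s > 0" and \<eta>: "\<eta> > 0" and U: "finite U"
  shows "{\<omega> \<in> space M. \<exists>u\<in>U. \<eta> * sqrt (vinner n u u) < \<bar>vinner n u (Z \<omega>)\<bar>} \<in> events"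
    and "prob {\<omega> \<in> space M. \<exists>u\<in>U. \<eta> * sqrt (vinner n u u) < \<bar>vinner n u (Z \<omega>)\<bar>}
      \<le> real (card U) * (2 * exp (- \<eta>\<^sup>2 / (2 * s\<^sup>2)))"
proof -
  have [measurable]: "(\<lambda>\<omega>. Z \<omega> i) \<in> borel_measurable M" if "i \<in> {..<n}" for i
    using ind that unfolding indep_vars_def by auto
  have ev: "{\<omega> \<in> space M. \<eta> * sqrt (vinner n u u) < \<bar>vinner n u (Z \<omega>)\<bar>} \<in> events" for u
    unfolding vinner_def by measurable
  have eq: "{\<omega> \<in> space M. \<exists>u\<in>U. \<eta> * sqrt (vinner n u u) < \<bar>vinner n u (Z \<omega>)\<bar>} =
     (\<Union>u\<in>U. {\<omega> \<in> space M. \<eta> * sqrt (vinner n u u) < \<bar>vinner n u (Z \<omega>)\<bar>})"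
    by auto
  then show "{\<omega> \<in> space M. \<exists>u\<in>U. \<eta> * sqrt (vinner n u u) < \<bar>vinner n u (Z \<omega>)\<bar>} \<in> events"
    using U ev by auto
  have "prob (\<Union>u\<in>U. {\<omega> \<in> space M. \<eta> * sqrt (vinner n u u) < \<bar>vinner n u (Z \<omega>)\<bar>})
      \<le> (\<Sum>u\<in>U. prob {\<omega> \<in> space M. \<eta> * sqrt (vinner n u u) < \<bar>vinner n u (Z \<omega>)\<bar>})"
    using U ev by (intro measure_UNION_le) auto
  also have "\<dots> \<le> (\<Sum>u\<in>U. 2 * exp (- \<eta>\<^sup>2 / (2 * s\<^sup>2)))"
    by (intro sum_mono prob_vinner_gaussian_gt[OF ind D s \<eta>]) auto
  finally show "prob {\<omega> \<in> space M. \<exists>u\<in>U. \<eta> * sqrt (vinner n u u) < \<bar>vinner n u (Z \<omega>)\<bar>}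
      \<le> real (card U) * (2 * exp (- \<eta>\<^sup>2 / (2 * s\<^sup>2)))"
    unfolding eq by simp
qed

lemma prob_norm_gaussian_lt:
  assumes ind: "indep_vars (\<lambda>_. borel) (\<lambda>i \<omega>. Z \<omega> i) {..<n}"
    and D: "\<And>i. i < n \<Longrightarrow> distributed M lborel (\<lambda>\<omega>. Z \<omega> i) (normal_density 0 (\<sigma> / sqrt (real n)))"
    and \<sigma>: "\<sigma> > 0" and n: "n > 0"
  shows "prob {\<omega> \<in> space M. vinner n (Z \<omega>) (Z \<omega>) < \<sigma>\<^sup>2 / 4} \<le> (exp (1 / 4) / sqrt 3) ^ n"
proof -
  have [measurable]: "(\<lambda>\<omega>. Z \<omega> i) \<in> borel_measurable M" if "i \<in> {..<n}" for i
    using ind that unfolding indep_vars_def by auto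
  define b where "b = - real n / \<sigma>\<^sup>2"
  have d: "1 - 2 * b * (\<sigma> / sqrt (real n))\<^sup>2 = 3"
    using n \<sigma> by (simp add: b_def power_divide)
  have "- real n / 4 \<le> (\<Sum>i\<in>{..<n}. 0 * Z \<omega> i + b * (Z \<omega> i)\<^sup>2)"
    if "vinner n (Z \<omega>) (Z \<omega>) < \<sigma>\<^sup>2 / 4" for \<omega>
  proof -
    have "b * (\<sigma>\<^sup>2 / 4) \<le> b * vinner n (Z \<omega>) (Z \<omega>)"
      using that n \<sigma> by (intro mult_left_mono_neg) (auto simp: b_def)
    then show ?thesis
      using \<sigma> by (simp add: b_def vinner_def sum_distrib_left power2_eq_square)
  qed
  then have "{\<omega> \<in> space M. vinner n (Z \<omega>) (Z \<omega>) < \<sigma>\<^sup>2 / 4} \<subseteq>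
      {\<omega> \<in> space M. - real n / 4 \<le> (\<Sum>i\<in>{..<n}. 0 * Z \<omega> i + b * (Z \<omega> i)\<^sup>2)}"
    by auto
  then have "prob {\<omega> \<in> space M. vinner n (Z \<omega>) (Z \<omega>) < \<sigma>\<^sup>2 / 4} \<le>
      prob {\<omega> \<in> space M. - real n / 4 \<le> (\<Sum>i\<in>{..<n}. 0 * Z \<omega> i + b * (Z \<omega> i)\<^sup>2)}"
    by (intro finite_measure_mono) measurable
  also have "\<dots> \<le> exp (real n / 4) * (1 / sqrt 3) ^ n"
    using prob_quadratic_form_ge[OF _ ind D, of b "- real n / 4" "\<lambda>_. 0"] d \<sigma> n by simp
  also have "\<dots> = (exp (1 / 4) / sqrt 3) ^ n"
    by (simp add: power_divide exp_of_nat_mult[symmetric])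
  finally show ?thesis .
qed

lemma prob_norm_gaussian_gt:
  assumes ind: "indep_vars (\<lambda>_. borel) (\<lambda>i \<omega>. Z \<omega> i) {..<n}"
    and D: "\<And>i. i < n \<Longrightarrow> distributed M lborel (\<lambda>\<omega>. Z \<omega> i) (normal_density 0 (\<sigma> / sqrt (real n)))"
    and \<sigma>: "\<sigma> > 0" and n: "n > 0"
  shows "prob {\<omega> \<in> space M. 4 * \<sigma>\<^sup>2 < vinner n (Z \<omega>) (Z \<omega>)} \<le> (sqrt 2 / exp 1) ^ n"
proof -
  have [measurable]: "(\<lambda>\<omega>. Z \<omega> i) \<in> borel_measurable M" if "i \<in> {..<n}" for i
    using ind that unfolding indep_vars_def by auto
  define b where "b = real n / (4 * \<sigma>\<^sup>2)"
  have d: "1 - 2 * b * (\<sigma> / sqrt (real n))\<^sup>2 = 1 / 2"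
    using n \<sigma> by (simp add: b_def power_divide)
  have "real n \<le> (\<Sum>i\<in>{..<n}. 0 * Z \<omega> i + b * (Z \<omega> i)\<^sup>2)"
    if "4 * \<sigma>\<^sup>2 < vinner n (Z \<omega>) (Z \<omega>)" for \<omega>
  proof -
    have "b * (4 * \<sigma>\<^sup>2) \<le> b * vinner n (Z \<omega>) (Z \<omega>)"
      using that n \<sigma> by (intro mult_left_mono) (auto simp: b_def)
    then show ?thesis
      using \<sigma> by (simp add: b_def vinner_def sum_distrib_left power2_eq_square)
  qed
  then have "{\<omega> \<in> space M. 4 * \<sigma>\<^sup>2 < vinner n (Z \<omega>) (Z \<omega>)} \<subseteq>
      {\<omega> \<in> space M. real n \<le> (\<Sum>i\<in>{..<n}. 0 * Z \<omega> i + b * (Z \<omega> i)\<^sup>2)}"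
    by auto
  then have "prob {\<omega> \<in> space M. 4 * \<sigma>\<^sup>2 < vinner n (Z \<omega>) (Z \<omega>)} \<le>
      prob {\<omega> \<in> space M. real n \<le> (\<Sum>i\<in>{..<n}. 0 * Z \<omega> i + b * (Z \<omega> i)\<^sup>2)}"
    by (intro finite_measure_mono) measurable
  also have "\<dots> \<le> exp (- real n) * (1 / sqrt (1 / 2)) ^ n"
    using prob_quadratic_form_ge[OF _ ind D, of b "real n" "\<lambda>_. 0"] d \<sigma> n by simp
  also have "\<dots> = (sqrt 2 / exp 1) ^ n"
    by (simp add: power_divide exp_of_nat_mult[symmetric] exp_minus real_sqrt_divide field_simps)
  finally show ?thesis .
qed

lemma prob_noise_typical:
  assumes ind: "indep_vars (\<lambda>_. borel) (\<lambda>i \<omega>. Z \<omega> i) {..<n}"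
    and D: "\<And>i. i < n \<Longrightarrow> distributed M lborel (\<lambda>\<omega>. Z \<omega> i) (normal_density 0 (\<sigma> / sqrt (real n)))"
    and \<sigma>: "\<sigma> > 0" and n: "n > 0" and \<eta>: "\<eta> > 0" and U: "finite U"
  shows "{\<omega> \<in> space M. noise_typical n U \<eta> \<sigma> (Z \<omega>)} \<in> events"
    and "1 - (real (card U) * (2 * exp (- real n * \<eta>\<^sup>2 / (2 * \<sigma>\<^sup>2)))
        + (exp (1 / 4) / sqrt 3) ^ n + (sqrt 2 / exp 1) ^ n)
      \<le> prob {\<omega> \<in> space M. noise_typical n U \<eta> \<sigma> (Z \<omega>)}"
proof -
  have [measurable]: "(\<lambda>\<omega>. Z \<omega> i) \<in> borel_measurable M" if "i \<in> {..<n}" for i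
    using ind that unfolding indep_vars_def by auto
  have s: "\<sigma> / sqrt (real n) > 0"
    using \<sigma> n by simp
  define B1 where "B1 = {\<omega> \<in> space M. \<exists>u\<in>U. \<eta> * sqrt (vinner n u u) < \<bar>vinner n u (Z \<omega>)\<bar>}"
  define B2 where "B2 = {\<omega> \<in> space M. vinner n (Z \<omega>) (Z \<omega>) < \<sigma>\<^sup>2 / 4}"
  define B3 where "B3 = {\<omega> \<in> space M. 4 * \<sigma>\<^sup>2 < vinner n (Z \<omega>) (Z \<omega>)}"
  have ev: "B1 \<in> events" "B2 \<in> events" "B3 \<in> events"
    using prob_ex_vinner_gaussian_gt(1)[OF ind D s \<eta> U] unfolding B1_def B2_def B3_def vinner_def
    by measurable
  have typical: "{\<omega> \<in> space M. noise_typical n U \<eta> \<sigma> (Z \<omega>)} = space M - (B1 \<union> B2 \<union> B3)"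
    by (auto simp: noise_typical_def B1_def B2_def B3_def not_less)
  then show "{\<omega> \<in> space M. noise_typical n U \<eta> \<sigma> (Z \<omega>)} \<in> events"
    using ev by auto
  have "\<eta>\<^sup>2 / (2 * (\<sigma> / sqrt (real n))\<^sup>2) = real n * \<eta>\<^sup>2 / (2 * \<sigma>\<^sup>2)"
    using n by (simp add: power_divide)
  then have "prob B1 \<le> real (card U) * (2 * exp (- real n * \<eta>\<^sup>2 / (2 * \<sigma>\<^sup>2)))"
    using prob_ex_vinner_gaussian_gt(2)[OF ind D s \<eta> U] unfolding B1_def by simp
  moreover have "prob (B1 \<union> B2 \<union> B3) \<le> prob B1 + prob B2 + prob B3"
    using ev by (meson measure_Un_le sets.Un order_trans add_right_mono)
  ultimately have "prob (B1 \<union> B2 \<union> B3) \<le> real (card U) * (2 * exp (- real n * \<eta>\<^sup>2 / (2 * \<sigma>\<^sup>2)))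
      + (exp (1 / 4) / sqrt 3) ^ n + (sqrt 2 / exp 1) ^ n"
    using prob_norm_gaussian_lt[OF ind D \<sigma> n] prob_norm_gaussian_gt[OF ind D \<sigma> n]
    unfolding B2_def B3_def by linarith
  then show "1 - (real (card U) * (2 * exp (- real n * \<eta>\<^sup>2 / (2 * \<sigma>\<^sup>2)))
        + (exp (1 / 4) / sqrt 3) ^ n + (sqrt 2 / exp 1) ^ n)
      \<le> prob {\<omega> \<in> space M. noise_typical n U \<eta> \<sigma> (Z \<omega>)}"
    unfolding typical using ev by (subst prob_compl) auto
qed

end

section \<open>Tilted correlations for a typical noise realisation\<close>

definition resid_sig :: "nat \<Rightarrow> nat \<Rightarrow> (nat \<Rightarrow> nat \<Rightarrow> real) \<Rightarrow> real \<Rightarrow> (nat \<Rightarrow> real) \<Rightarrow> nat \<Rightarrow> nat \<Rightarrow> real"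
  where "resid_sig n p X thr b j =
    (\<lambda>i. signal n p X b i - proj n X (Cset n p X thr j) (signal n p X b) i)"

text \<open>The noise only enters through its inner products with these vectors.\<close>

definition test_vectors :: "nat \<Rightarrow> nat \<Rightarrow> (nat \<Rightarrow> nat \<Rightarrow> real) \<Rightarrow> real \<Rightarrow> (nat \<Rightarrow> real) \<Rightarrow> (nat \<Rightarrow> real) set"
  where "test_vectors n p X thr b =
    Xstar n p X thr ` {..<p} \<union> (\<Union>k<p. gs_basis n X (Cset n p X thr k)) \<union> resid_sig n p X thr b ` {..<p}"

lemma finite_Cset: "finite (Cset n p X thr j)"
  by (rule finite_subset[of _ "{..<p}"]) (auto simp: Cset_def)

lemma finite_test_vectors: "finite (test_vectors n p X thr b)"
  by (simp add: test_vectors_def finite_gs_basis[OF finite_Cset])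

lemma card_test_vectors_le:
  assumes "\<And>j. j < p \<Longrightarrow> real (card (Cset n p X thr j)) \<le> c"
  shows "real (card (test_vectors n p X thr b)) \<le> (2 + c) * real p"
proof -
  have "real (card (\<Union>k<p. gs_basis n X (Cset n p X thr k))) \<le> (\<Sum>k<p. real (card (gs_basis n X (Cset n p X thr k))))"
    using card_UN_le[of "{..<p}" "\<lambda>k. gs_basis n X (Cset n p X thr k)"] by (simp flip: of_nat_sum)
  also have "\<dots> \<le> (\<Sum>k<p. c)"
    using assms card_gs_basis_le[OF finite_Cset] by (intro sum_mono) (meson lessThan_iff of_nat_le_iff order_trans)
  finally have "real (card (\<Union>k<p. gs_basis n X (Cset n p X thr k))) \<le> real p * c"
    by simp
  moreover have "card (Xstar n p X thr ` {..<p}) \<le> p" "card (resid_sig n p X thr b ` {..<p}) \<le> p"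
    by (auto intro: card_image_le[THEN order_trans])
  moreover have "card (test_vectors n p X thr b) \<le> card (Xstar n p X thr ` {..<p})
      + card (\<Union>k<p. gs_basis n X (Cset n p X thr k)) + card (resid_sig n p X thr b ` {..<p})"
    unfolding test_vectors_def by (meson card_Un_le le_trans add_le_mono order_refl)
  ultimately show ?thesis
    by (simp add: algebra_simps)
qed

lemma abs_divide_le_sqrt:
  fixes x c r L :: real
  assumes "\<bar>x\<bar> \<le> c" "0 < L" "L \<le> r\<^sup>2" "r > 0"
  shows "\<bar>x\<bar> / r \<le> c * sqrt (1 / L)"
proof -
  have "sqrt L \<le> r"
    using assms real_sqrt_le_mono[OF assms(3)] by simp
  then have "\<bar>x\<bar> / r \<le> \<bar>x\<bar> / sqrt L"
    using assms by (intro divide_left_mono) auto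
  also have "\<dots> \<le> c / sqrt L"
    using assms by (intro divide_right_mono) auto
  finally show ?thesis
    by (simp add: divide_inverse real_sqrt_inverse)
qed

text \<open>
  The parameters \<open>sN\<close>, \<open>Cx\<close> and \<open>ka\<close> stand for the bounds
  \<open>K1 n\<^sup>\<delta>\<close>, \<open>C n\<^sup>\<xi>\<close> and \<open>n\<^sup>\<kappa>\<close> of (A1), (A3) and (A6), and \<open>c2\<close> for the bound \<open>C2 n\<^sup>-\<^sup>\<gamma>\<close>
  of the additional condition.
\<close>

locale typical_design =
  fixes n p :: nat and X :: "nat \<Rightarrow> nat \<Rightarrow> real" and b e :: "nat \<Rightarrow> real"
    and thr c2 \<alpha> Mb sN Cx \<eta> \<sigma> ka :: real
  assumes unit_cols: "\<And>j. j < p \<Longrightarrow> vinner n (col X j) (col X j) = 1"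
    and lam_gt: "\<And>j. j < p \<Longrightarrow> 1 - a_coef n p X thr j > \<alpha>"
    and alpha_pos: "\<alpha> > 0"
    and cross_proj_le: "\<And>j k. j < p \<Longrightarrow> k \<in> supp p b - Cset n p X thr j \<Longrightarrow> k \<noteq> j \<Longrightarrow>
        \<bar>vinner n (PiX n p X thr j) (col X k)\<bar> \<le> c2"
    and thr_nonneg: "thr \<ge> 0" and c2_nonneg: "c2 \<ge> 0"
    and supp_nonempty: "supp p b \<noteq> {}"
    and coef_less: "\<And>j. j \<in> supp p b \<Longrightarrow> \<bar>b j\<bar> < Mb"
    and card_supp_le: "real (card (supp p b)) \<le> sN"
    and card_Cset_le: "\<And>j. j < p \<Longrightarrow> real (card (Cset n p X thr j)) \<le> Cx"
    and ka_pos: "ka > 0"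
    and resid_sig_large: "\<And>j. j < p \<Longrightarrow> \<not> supp p b \<subseteq> Cset n p X thr j \<Longrightarrow>
        1 < ka * (vinner n (resid_sig n p X thr b j) (resid_sig n p X thr b j) /
                  vinner n (signal n p X b) (signal n p X b))"
    and typical: "noise_typical n (test_vectors n p X thr b) \<eta> \<sigma> e"
    and sigma_pos: "\<sigma> > 0" and eta_nonneg: "\<eta> \<ge> 0"
    and eta_small: "Cx * \<eta>\<^sup>2 \<le> \<sigma>\<^sup>2 / 8" "2 * \<eta>\<^sup>2 \<le> \<sigma>\<^sup>2 / 16"
    and margin_pos: "\<alpha> * Min ((\<lambda>j. \<bar>b j\<bar>) ` supp p b) - sN * Mb * (thr + c2) - \<eta> > 0"
begin

abbreviation "S \<equiv> supp p b"
abbreviation "C j \<equiv> Cset n p X thr j"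
abbreviation "Q j \<equiv> gs_basis n X (C j)"
abbreviation "f \<equiv> signal n p X b"
abbreviation "y \<equiv> resp n p X b e"
abbreviation "Xs j \<equiv> Xstar n p X thr j"
abbreviation "lam j \<equiv> 1 - a_coef n p X thr j"
abbreviation "bmin \<equiv> Min ((\<lambda>j. \<bar>b j\<bar>) ` S)"
abbreviation "nu \<equiv> sN * Mb * (thr + c2)"
abbreviation "rX j \<equiv> (\<lambda>i. col X j i - orth_proj n (Q j) (col X j) i)"

lemma finite_S: "finite S" and S_subset: "S \<subseteq> {..<p}"
  by (auto simp: supp_def)

lemma noise_test_vector_le:
  "u \<in> test_vectors n p X thr b \<Longrightarrow> \<bar>vinner n u e\<bar> \<le> \<eta> * sqrt (vinner n u u)"
  using typical by (simp add: noise_typical_def)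

lemma noise_norm_ge: "\<sigma>\<^sup>2 / 4 \<le> vinner n e e" and noise_norm_le: "vinner n e e \<le> 4 * \<sigma>\<^sup>2"
  using typical by (simp_all add: noise_typical_def)

lemma finite_Q: "finite (Q j)"
  and card_Q: "card (Q j) \<le> card (C j)"
  and orthonormal_Q: "orthonormal n (Q j)"
  and col_C_eq: "\<forall>k\<in>C j. \<forall>i<n. X i k = orth_proj n (Q j) (col X k) i"
  by (simp_all add: finite_gs_basis card_gs_basis_le orthonormal_gs_basis orth_proj_gs_basis_col finite_Cset)

lemma proj_Cset_eq: "proj n X (C j) v = orth_proj n (Q j) v"
  by (rule proj_eq_orth_proj_gs_basis[OF finite_Cset])

lemma PiX_eq: "PiX n p X thr j = orth_proj n (Q j) (col X j)"
  by (simp add: PiX_def proj_Cset_eq)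

lemma vinner_Xstar: "vinner n (Xs j) w = vinner n (rX j) w"
  by (rule vinner_cong) (auto simp: Xstar_def PiX_eq col_def)

lemma lam_eq_resid_norm:
  assumes "j < p"
  shows "lam j = vinner n (rX j) (rX j)"
proof -
  have "a_coef n p X thr j = vinner n (orth_proj n (Q j) (col X j)) (orth_proj n (Q j) (col X j))"
    using unit_cols[OF assms] by (simp add: a_coef_def PiX_eq)
  moreover have "1 = vinner n (orth_proj n (Q j) (col X j)) (orth_proj n (Q j) (col X j)) + vinner n (rX j) (rX j)"
    using pythagoras_orth_proj[OF orthonormal_Q finite_Q, of "col X j"] unit_cols[OF assms] by simp
  ultimately show ?thesis by simp
qed

lemma lam_le_1:
  assumes "j < p"
  shows "lam j \<le> 1"
  using unit_cols[OF assms] vinner_self_nonneg[of n "PiX n p X thr j"] by (simp add: a_coef_def)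

lemma lam_pos:
  assumes "j < p"
  shows "lam j > 0"
  using lam_gt[OF assms] alpha_pos by simp

lemma vinner_Xstar_col_self:
  assumes "j < p"
  shows "vinner n (Xs j) (col X j) = lam j"
  unfolding vinner_Xstar lam_eq_resid_norm[OF assms] by (rule vinner_orth_resid_eq[OF orthonormal_Q finite_Q])

lemma vinner_Xstar_col_Cset:
  assumes "l \<in> C j"
  shows "vinner n (Xs j) (col X l) = 0"
proof -
  have "vinner n (Xs j) (col X l) = vinner n (rX j) (orth_proj n (Q j) (col X l))"
    unfolding vinner_Xstar by (rule vinner_cong) (use col_C_eq assms in \<open>auto simp: col_def\<close>)
  also have "\<dots> = 0"
    by (rule vinner_orth_resid_orth_proj[OF orthonormal_Q finite_Q])
  finally show ?thesis .
qed

lemma abs_vinner_Xstar_col_le: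
  assumes "j < p" "l \<in> S" "l \<noteq> j"
  shows "\<bar>vinner n (Xs j) (col X l)\<bar> \<le> thr + c2"
proof (cases "l \<in> C j")
  case True
  then show ?thesis using vinner_Xstar_col_Cset thr_nonneg c2_nonneg by simp
next
  case False
  have lp: "l < p"
    using assms(2) S_subset by auto
  have corr: "\<bar>corr n X j l\<bar> \<le> thr"
    using False lp assms(3)
    by (auto simp: Cset_def corr_def vinner_sym)
  have "vinner n (Xs j) (col X l) = corr n X j l - vinner n (PiX n p X thr j) (col X l)"
    unfolding vinner_Xstar vinner_diff_left corr_def PiX_eq ..
  moreover have "\<bar>vinner n (PiX n p X thr j) (col X l)\<bar> \<le> c2"
    using cross_proj_le[OF assms(1), of l] False assms by auto
  ultimately show ?thesis using corr by linarith
qed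

lemma abs_vinner_Xstar_noise_le:
  assumes "k < p"
  shows "\<bar>vinner n (Xs k) e\<bar> \<le> \<eta>"
proof -
  have "vinner n (Xs k) (Xs k) = vinner n (rX k) (Xs k)"
    by (rule vinner_Xstar)
  also have "\<dots> = vinner n (Xs k) (rX k)"
    by (rule vinner_sym)
  also have "\<dots> = lam k"
    unfolding vinner_Xstar lam_eq_resid_norm[OF assms] ..
  finally have "sqrt (vinner n (Xs k) (Xs k)) \<le> 1"
    using lam_le_1[OF assms] by simp
  then have "\<eta> * sqrt (vinner n (Xs k) (Xs k)) \<le> \<eta>"
    using eta_nonneg by (simp add: mult_left_le)
  moreover have "\<bar>vinner n (Xs k) e\<bar> \<le> \<eta> * sqrt (vinner n (Xs k) (Xs k))"
    using assms by (intro noise_test_vector_le) (simp add: test_vectors_def)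
  ultimately show ?thesis by linarith
qed

lemma abs_vinner_basis_noise_le:
  assumes "k < p" "q \<in> Q k"
  shows "\<bar>vinner n q e\<bar> \<le> \<eta>"
proof -
  have "vinner n q q = 1"
    using orthonormal_Q[of k] assms(2) by (simp add: orthonormal_def)
  moreover have "\<bar>vinner n q e\<bar> \<le> \<eta> * sqrt (vinner n q q)"
    using assms by (intro noise_test_vector_le) (auto simp: test_vectors_def)
  ultimately show ?thesis by simp
qed

lemma signal_eq: "i < n \<Longrightarrow> f i = (\<Sum>l\<in>S. b l * col X l i)"
  by (simp add: signal_def col_def mult.commute)

lemma resp_eq:
  assumes "i < n"
  shows "y i = f i + e i"
proof -
  have "(\<Sum>j<p. X i j * b j) = (\<Sum>j\<in>S. X i j * b j)"
    by (rule sum.mono_neutral_right) (auto simp: supp_def)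
  then show ?thesis using assms by (simp add: resp_def signal_def)
qed

lemma vinner_signal: "vinner n w f = (\<Sum>l\<in>S. b l * vinner n w (col X l))"
proof -
  have "vinner n w f = vinner n w (\<lambda>i. \<Sum>l\<in>S. b l * col X l i)"
    by (rule vinner_cong) (auto simp: signal_eq)
  also have "\<dots> = (\<Sum>l\<in>S. b l * vinner n w (col X l))"
    unfolding vinner_def by (simp add: sum_distrib_left mult_ac) (rule sum.swap)
  finally show ?thesis .
qed

lemma vinner_resp: "vinner n w y = vinner n w f + vinner n w e"
proof -
  have "vinner n w y = vinner n w (\<lambda>i. f i + e i)"
    by (rule vinner_cong) (auto simp: resp_eq)
  then show ?thesis by (simp add: vinner_add_right)
qed

lemma Mb_pos: "Mb > 0"
proof -
  obtain j where "j \<in> S" using supp_nonempty by auto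
  then show ?thesis using coef_less[of j] by linarith
qed

lemma nu_nonneg: "nu \<ge> 0"
  using card_supp_le Mb_pos thr_nonneg c2_nonneg by (intro mult_nonneg_nonneg) auto

lemma vinner_Xstar_signal_dev_le:
  assumes "j < p"
  shows "\<bar>vinner n (Xs j) f - (if j \<in> S then b j * lam j else 0)\<bar> \<le> nu"
proof -
  have diff: "vinner n (Xs j) f - (if j \<in> S then b j * lam j else 0) = (\<Sum>l\<in>S - {j}. b l * vinner n (Xs j) (col X l))"
  proof (cases "j \<in> S")
    case True
    have "vinner n (Xs j) f = b j * vinner n (Xs j) (col X j) + (\<Sum>l\<in>S - {j}. b l * vinner n (Xs j) (col X l))"
      unfolding vinner_signal using True finite_S by (simp add: sum.remove)
    then show ?thesis using True vinner_Xstar_col_self[OF assms] by simp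
  next
    case False
    then show ?thesis by (simp add: vinner_signal)
  qed
  have "\<bar>\<Sum>l\<in>S - {j}. b l * vinner n (Xs j) (col X l)\<bar> \<le> (\<Sum>l\<in>S - {j}. Mb * (thr + c2))"
  proof (rule order_trans[OF sum_abs], rule sum_mono)
    fix l assume l: "l \<in> S - {j}"
    have "\<bar>b l * vinner n (Xs j) (col X l)\<bar> = \<bar>b l\<bar> * \<bar>vinner n (Xs j) (col X l)\<bar>"
      by (simp add: abs_mult)
    also have "\<dots> \<le> Mb * (thr + c2)"
      using coef_less[of l] abs_vinner_Xstar_col_le[OF assms, of l] l
      by (intro mult_mono) auto
    finally show "\<bar>b l * vinner n (Xs j) (col X l)\<bar> \<le> Mb * (thr + c2)" .
  qed
  also have "\<dots> = real (card (S - {j})) * (Mb * (thr + c2))"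
    by simp
  also have "\<dots> \<le> sN * (Mb * (thr + c2))"
  proof (rule mult_right_mono)
    have "card (S - {j}) \<le> card S"
      using finite_S by (intro card_mono) auto
    then show "real (card (S - {j})) \<le> sN"
      using card_supp_le by linarith
    show "0 \<le> Mb * (thr + c2)"
      using Mb_pos thr_nonneg c2_nonneg by simp
  qed
  finally show ?thesis unfolding diff by (simp add: mult.assoc)
qed

lemma vinner_Xstar_signal_eq_0:
  assumes "S \<subseteq> C j" shows "vinner n (Xs j) f = 0"
  unfolding vinner_signal using assms vinner_Xstar_col_Cset by (auto intro!: sum.neutral)

lemma vinner_Xstar_resp_dev_le:
  assumes "j < p"
  shows "\<bar>vinner n (Xs j) y - (if j \<in> S then b j * lam j else 0)\<bar> \<le> nu + \<eta>"
  using vinner_Xstar_signal_dev_le[OF assms] abs_vinner_Xstar_noise_le[OF assms] unfolding vinner_resp by linarith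

lemma signal_norm_le: "vinner n f f \<le> (sN * Mb)\<^sup>2"
proof -
  have "vinner n f f = (\<Sum>i<n. (\<Sum>l\<in>S. b l * X i l)\<^sup>2)"
    unfolding vinner_def by (intro sum.cong) (auto simp: signal_eq col_def power2_eq_square)
  also have "\<dots> \<le> (\<Sum>i<n. (\<Sum>l\<in>S. (b l)\<^sup>2) * (\<Sum>l\<in>S. (X i l)\<^sup>2))"
    by (intro sum_mono Cauchy_Schwarz_ineq_sum)
  also have "\<dots> = (\<Sum>l\<in>S. (b l)\<^sup>2) * (\<Sum>l\<in>S. vinner n (col X l) (col X l))"
    unfolding vinner_def col_def by (simp add: sum_distrib_left power2_eq_square) (rule sum.swap)
  also have "(\<Sum>l\<in>S. vinner n (col X l) (col X l)) = real (card S)"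
    using S_subset unit_cols by (simp add: subset_eq)
  also have "(\<Sum>l\<in>S. (b l)\<^sup>2) \<le> (\<Sum>l\<in>S. Mb\<^sup>2)"
    using coef_less by (intro sum_mono) (metis abs_ge_zero power2_abs power_mono less_imp_le)
  then have "(\<Sum>l\<in>S. (b l)\<^sup>2) * real (card S) \<le> (real (card S) * Mb\<^sup>2) * real (card S)"
    by (intro mult_right_mono) auto
  also have "\<dots> = (real (card S) * Mb)\<^sup>2"
    by (simp add: power2_eq_square)
  also have "\<dots> \<le> (sN * Mb)\<^sup>2"
    using card_supp_le Mb_pos by (intro power_mono mult_right_mono) auto
  finally show ?thesis .
qed

lemma resp_norm_le: "vinner n y y \<le> 2 * vinner n f f + 8 * \<sigma>\<^sup>2"
proof -
  have "vinner n y y = (\<Sum>i<n. (f i + e i)\<^sup>2)"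
    unfolding vinner_def by (intro sum.cong) (auto simp: resp_eq power2_eq_square)
  also have "\<dots> \<le> (\<Sum>i<n. 2 * (f i)\<^sup>2 + 2 * (e i)\<^sup>2)"
  proof (rule sum_mono)
    fix i
    have "0 \<le> (f i - e i)\<^sup>2"
      by simp
    then show "(f i + e i)\<^sup>2 \<le> 2 * (f i)\<^sup>2 + 2 * (e i)\<^sup>2"
      by (simp add: power2_eq_square algebra_simps)
  qed
  also have "\<dots> = 2 * vinner n f f + 2 * vinner n e e"
    by (simp add: vinner_def sum.distrib sum_distrib_left power2_eq_square)
  finally show ?thesis using noise_norm_le by linarith
qed

abbreviation "rv j v \<equiv> (\<lambda>i. v i - orth_proj n (Q j) v i)"

lemma resid_sig_eq: "resid_sig n p X thr b j = rv j f"
  by (simp add: resid_sig_def proj_Cset_eq)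

lemma resid_resp_eq: "i < n \<Longrightarrow> rv j y i = rv j f i + rv j e i"
proof -
  assume i: "i < n"
  have "orth_proj n (Q j) y = orth_proj n (Q j) (\<lambda>i. f i + e i)"
    by (rule orth_proj_cong) (simp add: resp_eq)
  then show ?thesis using i by (simp add: orth_proj_add resp_eq)
qed

lemma resid_noise_norm_ge:
  assumes "j < p"
  shows "vinner n (rv j e) (rv j e) \<ge> \<sigma>\<^sup>2 / 8"
proof -
  have "vinner n (orth_proj n (Q j) e) (orth_proj n (Q j) e) \<le> real (card (Q j)) * \<eta>\<^sup>2"
    using abs_vinner_basis_noise_le[OF assms] by (intro vinner_orth_proj_self_le[OF orthonormal_Q finite_Q]) (simp add: vinner_sym)
  also have "\<dots> \<le> Cx * \<eta>\<^sup>2"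
    using card_Q[of j] card_Cset_le[OF assms] by (intro mult_right_mono) auto
  finally have "vinner n (orth_proj n (Q j) e) (orth_proj n (Q j) e) \<le> \<sigma>\<^sup>2 / 8"
    using eta_small(1) by linarith
  moreover have "vinner n e e = vinner n (orth_proj n (Q j) e) (orth_proj n (Q j) e) + vinner n (rv j e) (rv j e)"
    by (rule pythagoras_orth_proj[OF orthonormal_Q finite_Q])
  ultimately show ?thesis using noise_norm_ge by linarith
qed

lemma resid_resp_norm_ge:
  assumes "j < p"
  shows "vinner n (rv j y) (rv j y) \<ge> vinner n (rv j f) (rv j f) / 2 + \<sigma>\<^sup>2 / 16"
proof -
  define A where "A = sqrt (vinner n (rv j f) (rv j f))"
  have A0: "A \<ge> 0"
    unfolding A_def by (rule real_sqrt_ge_zero[OF vinner_self_nonneg])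
  have A2: "A\<^sup>2 = vinner n (rv j f) (rv j f)"
    unfolding A_def by (rule real_sqrt_pow2[OF vinner_self_nonneg])
  have "vinner n (rv j y) (rv j y) = vinner n (\<lambda>i. rv j f i + rv j e i) (\<lambda>i. rv j f i + rv j e i)"
    by (rule vinner_cong) (auto simp: resid_resp_eq)
  also have "\<dots> = vinner n (rv j f) (rv j f) + 2 * vinner n (rv j f) (rv j e) + vinner n (rv j e) (rv j e)"
  proof -
    have "vinner n (rv j e) (rv j f) = vinner n (rv j f) (rv j e)"
      by (rule vinner_sym)
    then show ?thesis by (simp only: vinner_add_left vinner_add_right)
  qed
  finally have eq: "vinner n (rv j y) (rv j y) = A\<^sup>2 + 2 * vinner n (rv j f) (rv j e) + vinner n (rv j e) (rv j e)"
    using A2 by simp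
  have "vinner n (rv j f) (rv j e) = vinner n (rv j f) e"
    by (rule vinner_orth_resid_eq[OF orthonormal_Q finite_Q, symmetric])
  moreover have "\<bar>vinner n (resid_sig n p X thr b j) e\<bar>
      \<le> \<eta> * sqrt (vinner n (resid_sig n p X thr b j) (resid_sig n p X thr b j))"
    using assms by (intro noise_test_vector_le) (simp add: test_vectors_def)
  ultimately have cr: "\<bar>vinner n (rv j f) (rv j e)\<bar> \<le> \<eta> * A"
    unfolding resid_sig_eq A_def by simp
  have "0 \<le> (A - 2 * \<eta>)\<^sup>2"
    by simp
  then have "2 * \<eta> * A \<le> A\<^sup>2 / 2 + 2 * \<eta>\<^sup>2"
    by (simp add: power2_eq_square algebra_simps)
  then show ?thesis using eq cr resid_noise_norm_ge[OF assms] eta_small(2) A2 by linarith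
qed

lemma resp_norm_split:
  assumes "j < p"
  shows "vinner n y y = vinner n (orth_proj n (Q j) y) (orth_proj n (Q j) y) + vinner n (rv j y) (rv j y)"
  by (rule pythagoras_orth_proj[OF orthonormal_Q finite_Q])

lemma resid_resp_norm_pos:
  assumes "j < p"
  shows "vinner n (rv j y) (rv j y) > 0"
proof -
  have "\<sigma>\<^sup>2 > 0"
    using sigma_pos by simp
  then show ?thesis using resid_resp_norm_ge[OF assms] vinner_self_nonneg[of n "rv j f"] by linarith
qed

lemma resp_norm_pos:
  assumes "j < p"
  shows "vinner n y y > 0"
  using resp_norm_split[OF assms] resid_resp_norm_pos[OF assms] vinner_self_nonneg[of n "orth_proj n (Q j) y"] by linarith

lemma one_minus_a_y_eq:
  assumes "j < p"
  shows "1 - a_y n p X thr y j = vinner n (rv j y) (rv j y) / vinner n y y"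
  using resp_norm_split[OF assms] resp_norm_pos[OF assms] by (simp add: a_y_def proj_Cset_eq field_simps)

lemma resc_bounds:
  assumes "j < p"
  shows "0 < resc s n p X thr y j" "resc s n p X thr y j \<le> 1"
proof -
  have r: "0 < vinner n (rv j y) (rv j y) / vinner n y y" "vinner n (rv j y) (rv j y) / vinner n y y \<le> 1"
    using resid_resp_norm_pos[OF assms] resp_norm_pos[OF assms] resp_norm_split[OF assms] vinner_self_nonneg[of n "orth_proj n (Q j) y"]
    by (auto simp: divide_le_eq_1)
  have l: "0 < lam j" "lam j \<le> 1" using lam_pos[OF assms] lam_le_1[OF assms] by auto
  have m: "0 < lam j * (vinner n (rv j y) (rv j y) / vinner n y y)" "lam j * (vinner n (rv j y) (rv j y) / vinner n y y) \<le> 1"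
    subgoal by (rule mult_pos_pos) (use r l in auto)
    subgoal by (rule mult_le_one) (use r l in auto)
    done
  show "0 < resc s n p X thr y j"
    using m l by (cases s) (simp_all only: resc_def one_minus_a_y_eq[OF assms] rescale.case real_sqrt_gt_zero)
  show "resc s n p X thr y j \<le> 1"
    using m l by (cases s) (simp_all only: resc_def one_minus_a_y_eq[OF assms] rescale.case real_sqrt_le_1_iff)
qed

abbreviation "T s j \<equiv> tilted s n p X thr y j"
abbreviation "Lmin \<equiv> \<alpha> * bmin - nu - \<eta>"
abbreviation "Ub \<equiv> (nu + \<eta>) / \<alpha> + (nu + \<eta>) * sqrt (128 / (\<alpha> * min (1 / ka) 1))
   + \<eta> * sqrt (16 * (2 * (sN * Mb)\<^sup>2 + 8 * \<sigma>\<^sup>2) / (\<alpha> * \<sigma>\<^sup>2))"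

lemma bmin_le: "j \<in> S \<Longrightarrow> bmin \<le> \<bar>b j\<bar>"
  using finite_S by (intro Min_le) auto

lemma bmin_pos: "bmin > 0"
proof -
  have "\<alpha> * bmin > 0"
    using margin_pos nu_nonneg eta_nonneg by linarith
  then show ?thesis using alpha_pos by (simp add: zero_less_mult_iff)
qed

lemma T_eq: "T s j = vinner n (Xs j) y / resc s n p X thr y j"
  by (simp add: tilted_def)

lemma tilted_lower:
  assumes "j \<in> S"
  shows "\<bar>T s j\<bar> \<ge> Lmin"
proof -
  have jp: "j < p"
    using assms S_subset by auto
  have "bmin * \<alpha> \<le> \<bar>b j\<bar> * lam j"
    using bmin_le[OF assms] lam_gt[OF jp] bmin_pos alpha_pos by (intro mult_mono) auto
  moreover have "\<bar>vinner n (Xs j) y - b j * lam j\<bar> \<le> nu + \<eta>"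
    using vinner_Xstar_resp_dev_le[OF jp] assms by simp
  moreover have "\<bar>b j * lam j\<bar> = \<bar>b j\<bar> * lam j"
    using lam_pos[OF jp] by (simp add: abs_mult)
  ultimately have I: "\<bar>vinner n (Xs j) y\<bar> \<ge> Lmin"
    by (simp add: mult.commute)
  have r: "0 < resc s n p X thr y j" "resc s n p X thr y j \<le> 1" using resc_bounds[OF jp] by auto
  have "\<bar>vinner n (Xs j) y\<bar> \<le> \<bar>vinner n (Xs j) y\<bar> / resc s n p X thr y j"
    using r by (simp add: le_divide_eq mult_left_le)
  also have "\<dots> = \<bar>T s j\<bar>"
    using r by (simp add: T_eq)
  finally show ?thesis using I by linarith
qed

lemma tilted_Lam_ratio:
  assumes "j \<in> S"
  shows "\<bar>T Lam j / b j - 1\<bar> \<le> (nu + \<eta>) / (\<alpha> * bmin)"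
proof -
  have jp: "j < p"
    using assms S_subset by auto
  have bj: "b j \<noteq> 0"
    using assms by (simp add: supp_def)
  have lp: "lam j > 0"
    using lam_pos[OF jp] .
  have "T Lam j / b j - 1 = (vinner n (Xs j) y - b j * lam j) / (lam j * b j)"
    using bj lp by (simp add: T_eq resc_def field_simps)
  then have "\<bar>T Lam j / b j - 1\<bar> = \<bar>vinner n (Xs j) y - b j * lam j\<bar> / (lam j * \<bar>b j\<bar>)"
    using lp by (simp add: abs_mult)
  also have "\<dots> \<le> (nu + \<eta>) / (\<alpha> * bmin)"
  proof (rule frac_le)
    show "0 \<le> nu + \<eta>"
      using nu_nonneg eta_nonneg by simp
    show "\<bar>vinner n (Xs j) y - b j * lam j\<bar> \<le> nu + \<eta>"
      using vinner_Xstar_resp_dev_le[OF jp] assms by simp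
    show "0 < \<alpha> * bmin"
      using alpha_pos bmin_pos by simp
    show "\<alpha> * bmin \<le> lam j * \<bar>b j\<bar>"
      using bmin_le[OF assms] lam_gt[OF jp] bmin_pos alpha_pos by (intro mult_mono) auto
  qed
  finally show ?thesis .
qed

lemma resc_BigLam_sq:
  assumes "k < p"
  shows "(resc BigLam n p X thr y k)\<^sup>2 = lam k * (vinner n (rv k y) (rv k y) / vinner n y y)"
  using lam_pos[OF assms] resid_resp_norm_pos[OF assms] resp_norm_pos[OF assms]
  by (simp add: resc_def one_minus_a_y_eq[OF assms])

text \<open>If the signal lies in the span of \<open>C k\<close>, the residual of \<open>y\<close> still carries the noise.\<close>

lemma resc_BigLam_sq_ge_subset:
  assumes "k < p" "S \<subseteq> C k"
  shows "\<alpha> * \<sigma>\<^sup>2 / (16 * (2 * (sN * Mb)\<^sup>2 + 8 * \<sigma>\<^sup>2)) \<le> (resc BigLam n p X thr y k)\<^sup>2"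
proof -
  define D where "D = 2 * (sN * Mb)\<^sup>2 + 8 * \<sigma>\<^sup>2"
  have D: "D > 0"
    using sigma_pos by (simp add: D_def add_nonneg_pos)
  have "vinner n (rv k y) (rv k y) \<ge> \<sigma>\<^sup>2 / 16"
    using resid_resp_norm_ge[OF assms(1)] vinner_self_nonneg[of n "rv k f"] by linarith
  moreover have "vinner n y y \<le> D"
    using resp_norm_le signal_norm_le by (simp add: D_def)
  ultimately have "(\<sigma>\<^sup>2 / 16) / D \<le> vinner n (rv k y) (rv k y) / vinner n y y"
    using resp_norm_pos[OF assms(1)] sigma_pos vinner_self_nonneg[of n "rv k y"] by (intro frac_le) auto
  then have "\<alpha> * ((\<sigma>\<^sup>2 / 16) / D) \<le> lam k * (vinner n (rv k y) (rv k y) / vinner n y y)"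
    using lam_gt[OF assms(1)] alpha_pos D by (intro mult_mono) auto
  then show ?thesis
    unfolding resc_BigLam_sq[OF assms(1)] by (simp add: D_def field_simps)
qed

text \<open>Otherwise (A6) makes the residual signal a non-negligible part of \<open>y\<close>.\<close>

lemma resc_BigLam_sq_ge_not_subset:
  assumes "k < p" "\<not> S \<subseteq> C k"
  shows "\<alpha> * min (1 / ka) 1 / 128 \<le> (resc BigLam n p X thr y k)\<^sup>2"
proof -
  define m where "m = min (1 / ka) 1"
  have m: "m > 0" "m \<le> 1" "m \<le> 1 / ka"
    using ka_pos by (auto simp: m_def)
  let ?A = "vinner n (rv k f) (rv k f)" and ?F = "vinner n f f"
  have F: "?F \<ge> 0"
    by (rule vinner_self_nonneg)
  have "?F \<le> ka * ?A"
  proof (cases "?F = 0")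
    case True
    then show ?thesis
      using ka_pos vinner_self_nonneg[of n "rv k f"] by simp
  next
    case False
    then have "?F > 0"
      using F by linarith
    then show ?thesis
      using resid_sig_large[OF assms] unfolding resid_sig_eq by (simp add: field_simps)
  qed
  have "m * ?F \<le> ?F / ka"
    using mult_right_mono[OF m(3) F] by simp
  also have "\<dots> \<le> ?A"
    using \<open>?F \<le> ka * ?A\<close> ka_pos by (simp add: pos_divide_le_eq mult.commute)
  finally have "m * ?F \<le> ?A" .
  moreover have "m * \<sigma>\<^sup>2 \<le> \<sigma>\<^sup>2"
    using m(1,2) by (intro mult_left_le_one_le) auto
  moreover have "m / 16 * (?F + \<sigma>\<^sup>2) = m * ?F / 16 + m * \<sigma>\<^sup>2 / 16"
    by (simp add: algebra_simps)
  ultimately have "m / 16 * (?F + \<sigma>\<^sup>2) \<le> vinner n (rv k y) (rv k y)"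
    using resid_resp_norm_ge[OF assms(1)] vinner_self_nonneg[of n "rv k f"] by linarith
  moreover have "vinner n y y \<le> 8 * (?F + \<sigma>\<^sup>2)"
    using resp_norm_le F by simp
  moreover have "?F + \<sigma>\<^sup>2 > 0"
    using F sigma_pos by (simp add: add_nonneg_pos)
  ultimately have "(m / 16 * (?F + \<sigma>\<^sup>2)) / (8 * (?F + \<sigma>\<^sup>2)) \<le> vinner n (rv k y) (rv k y) / vinner n y y"
    using resp_norm_pos[OF assms(1)] m vinner_self_nonneg[of n "rv k y"] by (intro frac_le) auto
  moreover have "(m / 16 * (?F + \<sigma>\<^sup>2)) / (8 * (?F + \<sigma>\<^sup>2)) = m / 128"
    using \<open>?F + \<sigma>\<^sup>2 > 0\<close> by (simp add: field_simps del: distrib_left distrib_right)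
  ultimately have "m / 128 \<le> vinner n (rv k y) (rv k y) / vinner n y y"
    by linarith
  then have "\<alpha> * (m / 128) \<le> lam k * (vinner n (rv k y) (rv k y) / vinner n y y)"
    using lam_gt[OF assms(1)] alpha_pos m by (intro mult_mono) auto
  then show ?thesis
    unfolding resc_BigLam_sq[OF assms(1)] by (simp add: m_def)
qed

lemma tilted_upper:
  assumes "k < p" "k \<notin> S"
  shows "\<bar>T s k\<bar> \<le> Ub"
proof -
  have num: "\<bar>vinner n (Xs k) y\<bar> \<le> nu + \<eta>"
    using vinner_Xstar_resp_dev_le[OF assms(1)] assms(2) by simp
  have r: "0 < resc s n p X thr y k"
    using resc_bounds[OF assms(1)] by simp
  have T_eq_abs: "\<bar>T s k\<bar> = \<bar>vinner n (Xs k) y\<bar> / resc s n p X thr y k"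
    using r by (simp add: T_eq abs_divide)
  have terms: "(nu + \<eta>) / \<alpha> \<ge> 0" "(nu + \<eta>) * sqrt (128 / (\<alpha> * min (1 / ka) 1)) \<ge> 0"
    "\<eta> * sqrt (16 * (2 * (sN * Mb)\<^sup>2 + 8 * \<sigma>\<^sup>2) / (\<alpha> * \<sigma>\<^sup>2)) \<ge> 0"
    using nu_nonneg eta_nonneg alpha_pos ka_pos sigma_pos
    by (auto intro!: mult_nonneg_nonneg divide_nonneg_nonneg)
  show ?thesis
  proof (cases s)
    case Lam
    have "\<bar>T s k\<bar> = \<bar>vinner n (Xs k) y\<bar> / lam k"
      using Lam lam_pos[OF assms(1)] by (simp add: T_eq resc_def)
    also have "\<dots> \<le> (nu + \<eta>) / \<alpha>"
      using num lam_gt[OF assms(1)] alpha_pos nu_nonneg eta_nonneg by (intro frac_le) auto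
    finally show ?thesis
      using terms by linarith
  next
    case BigLam
    show ?thesis
    proof (cases "S \<subseteq> C k")
      case True
      have "\<bar>vinner n (Xs k) y\<bar> \<le> \<eta>"
        using vinner_Xstar_signal_eq_0[OF True] abs_vinner_Xstar_noise_le[OF assms(1)] by (simp add: vinner_resp)
      then have "\<bar>T s k\<bar> \<le> \<eta> * sqrt (1 / (\<alpha> * \<sigma>\<^sup>2 / (16 * (2 * (sN * Mb)\<^sup>2 + 8 * \<sigma>\<^sup>2))))"
        unfolding T_eq_abs using BigLam r resc_BigLam_sq_ge_subset[OF assms(1) True] alpha_pos sigma_pos
        by (intro abs_divide_le_sqrt) (auto intro!: divide_pos_pos add_nonneg_pos)
      then show ?thesis
        using terms by simp
    next
      case False
      have "\<bar>T s k\<bar> \<le> (nu + \<eta>) * sqrt (1 / (\<alpha> * min (1 / ka) 1 / 128))"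
        unfolding T_eq_abs using num BigLam r resc_BigLam_sq_ge_not_subset[OF assms(1) False] alpha_pos ka_pos
        by (intro abs_divide_le_sqrt) auto
      then show ?thesis
        using terms by simp
    qed
  qed
qed

lemma tilted_ratio_le:
  assumes "k < p" "k \<notin> S"
  shows "\<bar>T s k\<bar> / Min ((\<lambda>j. \<bar>T s j\<bar>) ` S) \<le> Ub / Lmin"
proof -
  have "Lmin \<le> Min ((\<lambda>j. \<bar>T s j\<bar>) ` S)"
    using finite_S supp_nonempty tilted_lower by (intro Min.boundedI) auto
  moreover have "Ub \<ge> 0"
    using tilted_upper[OF assms, of s] abs_ge_zero[of "T s k"] by linarith
  ultimately show ?thesis
    using tilted_upper[OF assms] margin_pos by (intro frac_le) auto
qed

end

section \<open>Rates\<close>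

lemma mult_powr_tendsto_0: "a < 0 \<Longrightarrow> (\<lambda>n. c * real n powr a) \<longlonglongrightarrow> 0"
  using tendsto_mult_right_zero[OF tendsto_neg_powr[OF _ filterlim_real_sequentially], of a c] by simp

lemma eventually_mult_powr_less:
  "a < 0 \<Longrightarrow> \<epsilon> > 0 \<Longrightarrow> eventually (\<lambda>n. c * real n powr a < \<epsilon>) sequentially"
  using order_tendstoD(2)[OF mult_powr_tendsto_0] by blast

lemma exp_quarter_div_sqrt3_power_tendsto_0: "(\<lambda>n. (exp (1 / 4) / sqrt 3) ^ n) \<longlonglongrightarrow> (0::real)"
proof -
  have "(exp (1 / 4 :: real))\<^sup>2 = exp (1 / 2)"
    by (simp add: power2_eq_square exp_add[symmetric])
  also have "\<dots> \<le> exp 1"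
    by simp
  also have "exp (1::real) < 3"
    using e_less_272 by simp
  finally have "exp (1 / 4 :: real) < sqrt 3"
    by (metis real_less_rsqrt)
  then show ?thesis
    by (intro LIMSEQ_power_zero) simp
qed

lemma sqrt2_div_exp1_power_tendsto_0: "(\<lambda>n. (sqrt 2 / exp 1) ^ n) \<longlonglongrightarrow> (0::real)"
proof -
  have "sqrt 2 < sqrt ((3 / 2 :: real)\<^sup>2)"
    by (rule real_sqrt_less_mono) (simp add: power2_eq_square)
  also have "\<dots> < 2"
    by simp
  also have "2 \<le> exp (1::real)"
    using exp_ge_add_one_self[of 1] by simp
  finally show ?thesis
    by (intro LIMSEQ_power_zero) simp
qed

lemma eventually_mult_powr_le:
  assumes "a < b" "c > 0"
  shows "eventually (\<lambda>n. K * real n powr a \<le> c * real n powr b) sequentially"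
proof -
  have "eventually (\<lambda>n. (K / c) * real n powr (a - b) < 1) sequentially"
    using eventually_mult_powr_less[of "a - b" 1 "K / c"] assms by simp
  moreover have "eventually (\<lambda>n. n \<ge> 1) sequentially"
    by (rule eventually_ge_at_top)
  ultimately show ?thesis
  proof eventually_elim
    case (elim n)
    then have np: "real n > 0"
      by simp
    have "K * real n powr a = ((K / c) * real n powr (a - b)) * (c * real n powr b)"
      using assms np by (simp add: powr_diff field_simps)
    also have "\<dots> \<le> 1 * (c * real n powr b)"
      using elim assms np by (intro mult_right_mono) auto
    finally show ?case by simp
  qed
qed

lemma exp_neg_le_inverse: "(x::real) > 0 \<Longrightarrow> exp (- x) \<le> 1 / x"
proof -
  assume x: "x > 0"
  have "x \<le> exp x"
    using exp_ge_add_one_self[of x] by linarith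
  then have "exp (- x) * x \<le> exp (- x) * exp x"
    by (intro mult_left_mono) auto
  then have "exp (- x) * x \<le> 1"
    by (simp add: exp_minus)
  then show ?thesis using x by (simp add: field_simps)
qed

lemma union_bound_le:
  fixes A N P L x s c :: real
  assumes "0 \<le> A" "A \<le> c * N" "1 \<le> N" "0 \<le> P" "P \<le> exp L"
    and "ln N \<le> x / (8 * s)" "L \<le> x / (8 * s)" "x > 0" "s > 0" "c \<ge> 0"
  shows "A * P * (2 * exp (- x / (2 * s))) \<le> 8 * c * s / x"
proof -
  have "A * P * (2 * exp (- x / (2 * s))) \<le> (c * N) * exp L * (2 * exp (- x / (2 * s)))"
    using assms(1,2,4,5,10) by (intro mult_right_mono mult_mono) auto
  also have "\<dots> = 2 * c * (exp (ln N) * exp L * exp (- (x / (2 * s))))"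
    using assms(3) by simp
  also have "\<dots> = 2 * c * exp (ln N + L - x / (2 * s))"
    by (simp only: diff_conv_add_uminus exp_add)
  also have "\<dots> \<le> 2 * c * exp (- (x / (4 * s)))"
  proof -
    have "x / (2 * s) = 4 * (x / (8 * s))" "x / (4 * s) = 2 * (x / (8 * s))"
      using assms(9) by simp_all
    then have "ln N + L - x / (2 * s) \<le> - (x / (4 * s))"
      using assms(6,7) by linarith
    then show ?thesis
      using assms(10) by (intro mult_left_mono) auto
  qed
  also have "\<dots> \<le> 2 * c * (1 / (x / (4 * s)))"
    using assms by (intro mult_left_mono exp_neg_le_inverse) auto
  finally show ?thesis
    by simp
qed

lemma union_bound_tendsto_0:
  fixes p :: "nat \<Rightarrow> nat"
  assumes \<theta>: "0 \<le> \<theta>" "\<theta> < \<tau>" and \<sigma>: "\<sigma> > 0" and C: "C > 0" and \<xi>: "\<xi> \<le> 1"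
    and ln_p: "eventually (\<lambda>n. ln (real (p n)) \<le> K * real n powr \<theta>) sequentially"
  shows "(\<lambda>n. (2 + C * real n powr \<xi>) * real (p n) * (2 * exp (- (real n powr \<tau>) / (2 * \<sigma>\<^sup>2)))) \<longlonglongrightarrow> 0"
proof (rule tendsto_sandwich[of "\<lambda>n. 0"])
  have \<tau>: "\<tau> > 0"
    using \<theta> by linarith
  show "(\<lambda>n. 8 * (2 + C) * \<sigma>\<^sup>2 * real n powr (- \<tau>)) \<longlonglongrightarrow> 0"
    using \<tau> by (intro mult_powr_tendsto_0) simp
  show "eventually (\<lambda>n. 0 \<le> (2 + C * real n powr \<xi>) * real (p n) * (2 * exp (- (real n powr \<tau>) / (2 * \<sigma>\<^sup>2))))
      sequentially"
  proof (intro always_eventually allI)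
    fix n
    have "0 \<le> 2 + C * real n powr \<xi>"
      using C by simp
    then show "0 \<le> (2 + C * real n powr \<xi>) * real (p n) * (2 * exp (- (real n powr \<tau>) / (2 * \<sigma>\<^sup>2)))"
      by simp
  qed
  have "eventually (\<lambda>n. (2 / \<tau>) * real n powr (\<tau> / 2) \<le> (1 / (8 * \<sigma>\<^sup>2)) * real n powr \<tau>) sequentially"
    using \<tau> \<sigma> by (intro eventually_mult_powr_le) auto
  moreover have "eventually (\<lambda>n. K * real n powr \<theta> \<le> (1 / (8 * \<sigma>\<^sup>2)) * real n powr \<tau>) sequentially"
    using \<theta> \<sigma> by (intro eventually_mult_powr_le) auto
  ultimately show "eventually (\<lambda>n. (2 + C * real n powr \<xi>) * real (p n) * (2 * exp (- (real n powr \<tau>) / (2 * \<sigma>\<^sup>2)))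
        \<le> 8 * (2 + C) * \<sigma>\<^sup>2 * real n powr (- \<tau>)) sequentially"
    using ln_p eventually_ge_at_top[of 1]
  proof eventually_elim
    case (elim n)
    have n: "real n \<ge> 1"
      using elim by simp
    have "C * real n powr \<xi> \<le> C * real n"
      using n \<xi> C powr_mono[of \<xi> 1 "real n"] by simp
    then have "2 + C * real n powr \<xi> \<le> (2 + C) * real n"
      using n by (simp add: algebra_simps)
    moreover have "ln (real n) \<le> real n powr \<tau> / (8 * \<sigma>\<^sup>2)"
      using ln_powr_bound[of "real n" "\<tau> / 2"] n \<tau> elim(1) by simp
    moreover have "real (p n) \<le> exp (K * real n powr \<theta>)"
    proof (cases "p n = 0")
      case False
      have "exp (ln (real (p n))) \<le> exp (K * real n powr \<theta>)"
        using elim(3) by simp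
      with False show ?thesis
        by simp
    qed simp
    moreover have "K * real n powr \<theta> \<le> real n powr \<tau> / (8 * \<sigma>\<^sup>2)"
      using elim(2) by simp
    ultimately have "(2 + C * real n powr \<xi>) * real (p n) * (2 * exp (- (real n powr \<tau>) / (2 * \<sigma>\<^sup>2)))
        \<le> 8 * (2 + C) * \<sigma>\<^sup>2 / real n powr \<tau>"
      using n C \<sigma> by (intro union_bound_le[where c = "2 + C" and N = "real n" and L = "K * real n powr \<theta>"]) auto
    also have "\<dots> = 8 * (2 + C) * \<sigma>\<^sup>2 * real n powr (- \<tau>)"
      by (simp add: powr_minus_divide)
    finally show ?case .
  qed
qed simp_all

section \<open>The asymptotic model\<close>

text \<open>
  The model of the theorem, with the big-O hypotheses (A1) and (A2) replaced by explicit constants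
  \<open>K1\<close>, \<open>K2\<close>, and the exponent conditions combined into \<open>exps\<close>; the auxiliary exponent \<open>\<tau>\<close>
  (between \<open>\<theta>\<close> and \<open>1 - 2\<gamma>\<close>) sets the noise level \<open>\<eta> = n\<^bsup>(\<tau>-1)/2\<^esup>\<close> of the typical event.
\<close>

locale screening_model =
  fixes X :: "nat \<Rightarrow> nat \<Rightarrow> nat \<Rightarrow> real" and p :: "nat \<Rightarrow> nat"
    and \<beta> :: "nat \<Rightarrow> nat \<Rightarrow> real" and \<sigma> :: real
    and M :: "nat \<Rightarrow> 'w measure" and \<epsilon> :: "nat \<Rightarrow> 'w \<Rightarrow> nat \<Rightarrow> real"
    and \<delta> \<gamma> \<theta> \<xi> \<mu> \<kappa> \<tau> C1 C Mb \<alpha> C2 K1 K2 :: real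
  assumes unit_cols: "\<forall>n j. j < p n \<longrightarrow> vinner n (col (X n) j) (col (X n) j) = 1"
    and sigma_pos: "\<sigma> > 0"
    and prob: "\<forall>n. prob_space (M n)"
    and indep: "\<forall>n. prob_space.indep_vars (M n) (\<lambda>_. borel) (\<lambda>i \<omega>. \<epsilon> n \<omega> i) {..<n}"
    and gauss: "\<forall>n i. i < n \<longrightarrow>
        distributed (M n) lborel (\<lambda>\<omega>. \<epsilon> n \<omega> i) (normal_density 0 (\<sigma> / sqrt (real n)))"
    and delta_nonneg: "0 \<le> \<delta>" and xi_nonneg: "0 \<le> \<xi>" and theta: "0 \<le> \<theta>" "\<theta> < \<tau>"
    and exps: "\<mu> + \<delta> - \<gamma> + max (\<kappa> / 2) 0 < 0" "\<mu> + (\<tau> - 1) / 2 + max (\<kappa> / 2) 0 < 0"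
      "\<mu> + (\<tau> - 1) / 2 + \<delta> < 0" "\<xi> + \<tau> - 1 < 0"
    and K1_pos: "K1 > 0"
    and card_supp_le: "eventually (\<lambda>n. real (card (supp (p n) (\<beta> n))) \<le> K1 * real n powr \<delta>) sequentially"
    and ln_p_le: "eventually (\<lambda>n. ln (real (p n)) \<le> K2 * real n powr \<theta>) sequentially"
    and C1_pos: "C1 > 0" and C_pos: "C > 0"
    and card_Cset_le: "\<forall>n j. j < p n \<longrightarrow>
         real (card (Cset n (p n) (X n) (C1 * real n powr (-\<gamma>)) j)) \<le> C * real n powr \<xi>"
    and Mb_pos: "Mb > 0" and coef_less: "\<forall>n. \<forall>j\<in>supp (p n) (\<beta> n). \<bar>\<beta> n j\<bar> < Mb"
    and supp_nonempty: "eventually (\<lambda>n. supp (p n) (\<beta> n) \<noteq> {}) sequentially"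
    and min_coef_growth: "filterlim (\<lambda>n. real n powr \<mu> * Min ((\<lambda>j. \<bar>\<beta> n j\<bar>) ` supp (p n) (\<beta> n)))
         at_top sequentially"
    and alpha_pos: "0 < \<alpha>"
    and lam_gt: "\<forall>n j. j < p n \<longrightarrow> 1 - a_coef n (p n) (X n) (C1 * real n powr (-\<gamma>)) j > \<alpha>"
    and resid_sig_large: "\<forall>B. eventually (\<lambda>n. \<forall>j < p n.
          \<not> supp (p n) (\<beta> n) \<subseteq> Cset n (p n) (X n) (C1 * real n powr (-\<gamma>)) j \<longrightarrow>
          B < real n powr \<kappa> *
            (vinner n (resid_sig n (p n) (X n) (C1 * real n powr (-\<gamma>)) (\<beta> n) j)
                (resid_sig n (p n) (X n) (C1 * real n powr (-\<gamma>)) (\<beta> n) j)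
             / vinner n (signal n (p n) (X n) (\<beta> n)) (signal n (p n) (X n) (\<beta> n))))
        sequentially"
    and C2_pos: "C2 > 0"
    and cross_proj_le: "\<forall>n j k. j < p n \<longrightarrow>
          k \<in> supp (p n) (\<beta> n) - Cset n (p n) (X n) (C1 * real n powr (-\<gamma>)) j \<longrightarrow> k \<noteq> j \<longrightarrow>
          \<bar>vinner n (PiX n (p n) (X n) (C1 * real n powr (-\<gamma>)) j) (col (X n) k)\<bar>
            \<le> C2 * real n powr (-\<gamma>)"
begin

text \<open>\<open>Lmin\<close> and \<open>Ub\<close> are the bounds of \<open>typical_design\<close> at sample size \<open>n\<close>.\<close>

abbreviation "thr n \<equiv> C1 * real n powr (-\<gamma>)"
abbreviation "S n \<equiv> supp (p n) (\<beta> n)"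
abbreviation "bm n \<equiv> Min ((\<lambda>j. \<bar>\<beta> n j\<bar>) ` S n)"
abbreviation "nu n \<equiv> K1 * real n powr \<delta> * Mb * (C1 * real n powr (-\<gamma>) + C2 * real n powr (-\<gamma>))"
abbreviation "eta n \<equiv> real n powr ((\<tau> - 1) / 2)"
abbreviation "Lmin n \<equiv> \<alpha> * bm n - nu n - eta n"
abbreviation "Ub n \<equiv> (nu n + eta n) / \<alpha> + (nu n + eta n) * sqrt (128 / (\<alpha> * min (1 / real n powr \<kappa>) 1))
   + eta n * sqrt (16 * (2 * (K1 * real n powr \<delta> * Mb)\<^sup>2 + 8 * \<sigma>\<^sup>2) / (\<alpha> * \<sigma>\<^sup>2))"
abbreviation "kappa_pos_part \<equiv> max (\<kappa> / 2) 0"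

lemma nu_eq: "n \<ge> 1 \<Longrightarrow> nu n = K1 * Mb * (C1 + C2) * real n powr (\<delta> - \<gamma>)"
  by (simp add: powr_diff powr_minus field_simps)

lemma nu_nonneg: "nu n \<ge> 0"
  using K1_pos Mb_pos C1_pos C2_pos by (intro mult_nonneg_nonneg add_nonneg_nonneg) auto

lemma eta_sq: "(eta n)\<^sup>2 = real n powr (\<tau> - 1)"
  by (simp add: power2_eq_square powr_add[symmetric])

lemma Ub_nonneg: "Ub n \<ge> 0"
  using nu_nonneg alpha_pos sigma_pos K1_pos Mb_pos C1_pos C2_pos
  by (intro add_nonneg_nonneg mult_nonneg_nonneg divide_nonneg_nonneg) auto

lemma sqrt_128_eq:
  assumes "n \<ge> 1"
  shows "sqrt (128 / (\<alpha> * min (1 / real n powr \<kappa>) 1)) = sqrt (128 / \<alpha>) * real n powr kappa_pos_part"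
proof (cases "\<kappa> \<ge> 0")
  case True
  then have "1 / real n powr \<kappa> \<le> 1"
    using assms by (simp add: ge_one_powr_ge_zero)
  then have "min (1 / real n powr \<kappa>) 1 = 1 / real n powr \<kappa>"
    by (rule min_absorb1)
  moreover have "sqrt (real n powr \<kappa>) = real n powr (\<kappa> / 2)"
    using assms by (simp add: powr_half_sqrt[symmetric] powr_powr)
  moreover have "128 / (\<alpha> * (1 / real n powr \<kappa>)) = (128 / \<alpha>) * real n powr \<kappa>"
    by simp
  moreover have "kappa_pos_part = \<kappa> / 2"
    using True by simp
  ultimately show ?thesis
    by (simp only: real_sqrt_mult)
next
  case False
  have "real n powr \<kappa> \<le> real n powr 0"
    using assms False by (intro powr_mono) auto
  then have "min (1 / real n powr \<kappa>) 1 = 1"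
    using assms by (simp add: min_def)
  then show ?thesis
    using False assms by (simp add: max_def)
qed

lemma sqrt_signal_noise_le:
  assumes "n \<ge> 1"
  shows "sqrt (16 * (2 * (K1 * real n powr \<delta> * Mb)\<^sup>2 + 8 * \<sigma>\<^sup>2) / (\<alpha> * \<sigma>\<^sup>2)) \<le>
    (sqrt (16 / (\<alpha> * \<sigma>\<^sup>2)) * (sqrt 2 * K1 * Mb + sqrt 8 * \<sigma>)) * real n powr \<delta>"
proof -
  have "sqrt (16 * (2 * (K1 * real n powr \<delta> * Mb)\<^sup>2 + 8 * \<sigma>\<^sup>2) / (\<alpha> * \<sigma>\<^sup>2)) =
      sqrt (16 / (\<alpha> * \<sigma>\<^sup>2)) * sqrt (2 * (K1 * real n powr \<delta> * Mb)\<^sup>2 + 8 * \<sigma>\<^sup>2)"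
    by (simp add: real_sqrt_mult[symmetric])
  also have "sqrt (2 * (K1 * real n powr \<delta> * Mb)\<^sup>2 + 8 * \<sigma>\<^sup>2)
      \<le> sqrt (2 * (K1 * real n powr \<delta> * Mb)\<^sup>2) + sqrt (8 * \<sigma>\<^sup>2)"
    by (rule sqrt_add_le_add_sqrt) auto
  also have "sqrt (2 * (K1 * real n powr \<delta> * Mb)\<^sup>2) = sqrt 2 * K1 * Mb * real n powr \<delta>"
    using K1_pos Mb_pos by (simp add: real_sqrt_mult)
  also have "sqrt (8 * \<sigma>\<^sup>2) = sqrt 8 * \<sigma>"
    using sigma_pos by (simp add: real_sqrt_mult)
  also have "sqrt 8 * \<sigma> \<le> sqrt 8 * \<sigma> * real n powr \<delta>"
    using assms delta_nonneg sigma_pos by (simp add: ge_one_powr_ge_zero)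
  finally show ?thesis
    using sigma_pos alpha_pos by (simp add: mult_left_mono algebra_simps)
qed

abbreviation "c1 \<equiv> 1 / \<alpha> + sqrt (128 / \<alpha>)"
abbreviation "c2 \<equiv> sqrt (16 / (\<alpha> * \<sigma>\<^sup>2)) * (sqrt 2 * K1 * Mb + sqrt 8 * \<sigma>)"
abbreviation "Ub_majorant n \<equiv>
  c1 * (K1 * Mb * (C1 + C2) * real n powr (\<mu> + \<delta> - \<gamma> + kappa_pos_part)
    + real n powr (\<mu> + (\<tau> - 1) / 2 + kappa_pos_part))
  + c2 * real n powr (\<mu> + (\<tau> - 1) / 2 + \<delta>)"

lemma powr_mu_Ub_le:
  assumes n: "n \<ge> 1"
  shows "real n powr \<mu> * Ub n \<le> Ub_majorant n"
proof -
  have "real n powr kappa_pos_part \<ge> 1" "nu n + eta n \<ge> 0"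
    using n nu_nonneg by (simp_all add: ge_one_powr_ge_zero)
  then have "(nu n + eta n) / \<alpha> \<le> (nu n + eta n) * real n powr kappa_pos_part / \<alpha>"
    using alpha_pos by (intro divide_right_mono) (auto simp: mult_le_cancel_left1)
  moreover have "(nu n + eta n) * sqrt (128 / (\<alpha> * min (1 / real n powr \<kappa>) 1)) =
      (nu n + eta n) * real n powr kappa_pos_part * sqrt (128 / \<alpha>)"
    using sqrt_128_eq[OF n] by simp
  moreover have "eta n * sqrt (16 * (2 * (K1 * real n powr \<delta> * Mb)\<^sup>2 + 8 * \<sigma>\<^sup>2) / (\<alpha> * \<sigma>\<^sup>2)) \<le>
      eta n * (c2 * real n powr \<delta>)"
    using sqrt_signal_noise_le[OF n] by (intro mult_left_mono) auto
  ultimately have "Ub n \<le> c1 * ((nu n + eta n) * real n powr kappa_pos_part) + c2 * (eta n * real n powr \<delta>)"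
    by (simp add: algebra_simps add_divide_distrib)
  then have "real n powr \<mu> * Ub n \<le>
      real n powr \<mu> * (c1 * ((nu n + eta n) * real n powr kappa_pos_part) + c2 * (eta n * real n powr \<delta>))"
    by (intro mult_left_mono) auto
  also have "\<dots> = Ub_majorant n"
  proof -
    have "real n powr \<mu> * (c1 * ((nu n + eta n) * real n powr kappa_pos_part) + c2 * (eta n * real n powr \<delta>)) =
      c1 * (K1 * Mb * (C1 + C2) * (real n powr \<mu> * real n powr (\<delta> - \<gamma>) * real n powr kappa_pos_part)
        + real n powr \<mu> * real n powr ((\<tau> - 1) / 2) * real n powr kappa_pos_part)
      + c2 * (real n powr \<mu> * real n powr ((\<tau> - 1) / 2) * real n powr \<delta>)"
      unfolding nu_eq[OF n] by (simp only: ring_distribs mult_ac)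
    moreover have "\<mu> + (\<delta> - \<gamma>) + kappa_pos_part = \<mu> + \<delta> - \<gamma> + kappa_pos_part"
      by simp
    ultimately show ?thesis
      by (simp only: powr_add[symmetric])
  qed
  finally show ?thesis .
qed

lemma powr_mu_Ub_tendsto_0: "(\<lambda>n. real n powr \<mu> * Ub n) \<longlonglongrightarrow> 0"
proof (rule tendsto_sandwich[of "\<lambda>n. 0" _ _ Ub_majorant])
  show "eventually (\<lambda>n. 0 \<le> real n powr \<mu> * Ub n) sequentially"
    using Ub_nonneg by (intro always_eventually allI mult_nonneg_nonneg) auto
  show "eventually (\<lambda>n. real n powr \<mu> * Ub n \<le> Ub_majorant n) sequentially"
    using eventually_ge_at_top[of 1] by eventually_elim (rule powr_mu_Ub_le)
  have "\<mu> + \<delta> - \<gamma> + kappa_pos_part < 0" "\<mu> + (\<tau> - 1) / 2 + kappa_pos_part < 0" "\<mu> + (\<tau> - 1) / 2 + \<delta> < 0"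
    using exps(1-3) by auto
  then have "Ub_majorant \<longlonglongrightarrow> c1 * (0 + 0) + 0"
    by (intro tendsto_add tendsto_mult_right_zero tendsto_mult tendsto_const mult_powr_tendsto_0
        mult_powr_tendsto_0[where c = 1, simplified])
  then show "Ub_majorant \<longlonglongrightarrow> 0"
    by simp
qed simp

lemma powr_mu_nu_eta_tendsto_0: "(\<lambda>n. real n powr \<mu> * (nu n + eta n)) \<longlonglongrightarrow> 0"
proof -
  have "\<mu> + \<delta> - \<gamma> < 0" "\<mu> + (\<tau> - 1) / 2 < 0"
    using exps(1,2) by auto
  then have "(\<lambda>n. K1 * Mb * (C1 + C2) * real n powr (\<mu> + \<delta> - \<gamma>) + 1 * real n powr (\<mu> + (\<tau> - 1) / 2))
      \<longlonglongrightarrow> 0 + 0"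
    by (intro tendsto_add mult_powr_tendsto_0)
  moreover have "eventually (\<lambda>n. K1 * Mb * (C1 + C2) * real n powr (\<mu> + \<delta> - \<gamma>) + 1 * real n powr (\<mu> + (\<tau> - 1) / 2)
      = real n powr \<mu> * (nu n + eta n)) sequentially"
    using eventually_ge_at_top[of 1]
  proof eventually_elim
    case (elim n)
    have "real n powr \<mu> * (nu n + eta n) = K1 * Mb * (C1 + C2) * (real n powr \<mu> * real n powr (\<delta> - \<gamma>))
       + real n powr \<mu> * real n powr ((\<tau> - 1) / 2)"
      unfolding nu_eq[OF elim] by (simp only: ring_distribs mult_ac)
    then show ?case
      by (simp add: powr_add[symmetric] algebra_simps)
  qed
  ultimately show ?thesis
    using Lim_transform_eventually by fastforce
qed

lemma powr_mu_Lmin_tendsto_at_top: "filterlim (\<lambda>n. real n powr \<mu> * Lmin n) at_top sequentially"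
proof -
  have "filterlim (\<lambda>n. \<alpha> * (real n powr \<mu> * bm n)) at_top sequentially"
    by (rule filterlim_tendsto_pos_mult_at_top[OF tendsto_const alpha_pos min_coef_growth])
  then have "filterlim (\<lambda>n. - (real n powr \<mu> * (nu n + eta n)) + \<alpha> * (real n powr \<mu> * bm n)) at_top sequentially"
    using powr_mu_nu_eta_tendsto_0
    by (intro filterlim_tendsto_add_at_top[where c = 0]) (auto intro: tendsto_minus_cancel_left[THEN iffD1])
  then show ?thesis
    by (simp add: algebra_simps)
qed

lemma eventually_eta_small:
  "eventually (\<lambda>n. C * real n powr \<xi> * (eta n)\<^sup>2 \<le> \<sigma>\<^sup>2 / 8 \<and> 2 * (eta n)\<^sup>2 \<le> \<sigma>\<^sup>2 / 16) sequentially"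
proof -
  have a: "\<xi> + (\<tau> - 1) < 0" "\<tau> - 1 < 0" and s: "\<sigma>\<^sup>2 / 8 > 0" "\<sigma>\<^sup>2 / 16 > 0"
    using exps(4) xi_nonneg sigma_pos by auto
  have "eventually (\<lambda>n. C * real n powr (\<xi> + (\<tau> - 1)) < \<sigma>\<^sup>2 / 8) sequentially"
    by (rule eventually_mult_powr_less[OF a(1) s(1)])
  moreover have "eventually (\<lambda>n. 2 * real n powr (\<tau> - 1) < \<sigma>\<^sup>2 / 16) sequentially"
    by (rule eventually_mult_powr_less[OF a(2) s(2)])
  ultimately show ?thesis
    using eventually_ge_at_top[of 1]
  proof eventually_elim
    case (elim n)
    have "C * real n powr \<xi> * (eta n)\<^sup>2 = C * real n powr (\<xi> + (\<tau> - 1))"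
      unfolding eta_sq using elim by (simp add: powr_add mult.assoc)
    then show ?case
      using elim unfolding eta_sq by linarith
  qed
qed

text \<open>The sample sizes at which the deterministic hypotheses of \<open>typical_design\<close> hold.\<close>

definition regular :: "nat \<Rightarrow> bool" where
  "regular n \<longleftrightarrow> 1 \<le> n \<and> S n \<noteq> {} \<and> real (card (S n)) \<le> K1 * real n powr \<delta> \<and>
      (\<forall>j<p n. \<not> S n \<subseteq> Cset n (p n) (X n) (thr n) j \<longrightarrow>
          1 < real n powr \<kappa> * (vinner n (resid_sig n (p n) (X n) (thr n) (\<beta> n) j)
                 (resid_sig n (p n) (X n) (thr n) (\<beta> n) j) /
               vinner n (signal n (p n) (X n) (\<beta> n)) (signal n (p n) (X n) (\<beta> n)))) \<and>
      C * real n powr \<xi> * (eta n)\<^sup>2 \<le> \<sigma>\<^sup>2 / 8 \<and> 2 * (eta n)\<^sup>2 \<le> \<sigma>\<^sup>2 / 16 \<and>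
      1 \<le> real n powr \<mu> * Lmin n"

lemma eventually_regular: "eventually regular sequentially"
proof -
  have "eventually (\<lambda>n. 1 \<le> real n powr \<mu> * Lmin n) sequentially"
    using powr_mu_Lmin_tendsto_at_top unfolding filterlim_at_top by blast
  then show ?thesis
    using eventually_ge_at_top[of 1] supp_nonempty card_supp_le resid_sig_large[rule_format, of 1]
      eventually_eta_small
    unfolding regular_def by eventually_elim auto
qed

lemma Lmin_pos:
  assumes "regular n"
  shows "Lmin n > 0"
proof (rule ccontr)
  assume "\<not> Lmin n > 0"
  then have "real n powr \<mu> * Lmin n \<le> 0"
    by (simp add: mult_nonneg_nonpos)
  with assms show False
    by (simp add: regular_def)
qed

lemma typical_design_if_regular:
  assumes "regular n" "noise_typical n (test_vectors n (p n) (X n) (thr n) (\<beta> n)) (eta n) \<sigma> e"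
  shows "typical_design n (p n) (X n) (\<beta> n) e (thr n) (C2 * real n powr (-\<gamma>)) \<alpha> Mb
    (K1 * real n powr \<delta>) (C * real n powr \<xi>) (eta n) \<sigma> (real n powr \<kappa>)"
proof unfold_locales
  show "real (card (S n)) \<le> K1 * real n powr \<delta>" "S n \<noteq> {}"
    "C * real n powr \<xi> * (eta n)\<^sup>2 \<le> \<sigma>\<^sup>2 / 8" "2 * (eta n)\<^sup>2 \<le> \<sigma>\<^sup>2 / 16"
    "\<And>j. j < p n \<Longrightarrow> \<not> S n \<subseteq> Cset n (p n) (X n) (thr n) j \<Longrightarrow>
      1 < real n powr \<kappa> * (vinner n (resid_sig n (p n) (X n) (thr n) (\<beta> n) j)
        (resid_sig n (p n) (X n) (thr n) (\<beta> n) j) /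
         vinner n (signal n (p n) (X n) (\<beta> n)) (signal n (p n) (X n) (\<beta> n)))"
    using assms(1) by (simp_all add: regular_def)
  show "0 < \<alpha> * bm n - nu n - eta n"
    using Lmin_pos[OF assms(1)] by simp
  show "0 < real n powr \<kappa>"
    using assms(1) by (simp add: regular_def)
qed (use assms(2) unit_cols lam_gt alpha_pos cross_proj_le C1_pos C2_pos coef_less card_Cset_le sigma_pos
  in simp_all)

definition good_event :: "nat \<Rightarrow> 'w set" where
  "good_event n = {\<omega> \<in> space (M n).
     regular n \<and> noise_typical n (test_vectors n (p n) (X n) (thr n) (\<beta> n)) (eta n) \<sigma> (\<epsilon> n \<omega>)}"

lemma good_event_sets: "good_event n \<in> sets (M n)"
proof (cases "regular n")
  case True
  then have "n > 0"
    by (simp add: regular_def)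
  with True show ?thesis
    using prob_space.prob_noise_typical(1)[of "M n" "\<epsilon> n" n \<sigma> "eta n" "test_vectors n (p n) (X n) (thr n) (\<beta> n)"]
      prob indep gauss sigma_pos finite_test_vectors
    by (simp add: good_event_def)
qed (simp add: good_event_def)

lemma prob_good_event_tendsto_1: "(\<lambda>n. measure (M n) (good_event n)) \<longlonglongrightarrow> 1"
proof -
  define W where "W n = (2 + C * real n powr \<xi>) * real (p n) * (2 * exp (- (real n powr \<tau>) / (2 * \<sigma>\<^sup>2)))
      + (exp (1 / 4) / sqrt 3) ^ n + (sqrt 2 / exp 1) ^ n" for n
  have "\<xi> \<le> 1"
    using exps(4) theta by linarith
  then have "W \<longlonglongrightarrow> 0 + 0 + 0"
    unfolding W_def[abs_def]
    by (intro tendsto_add union_bound_tendsto_0[OF theta sigma_pos C_pos _ ln_p_le]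
        exp_quarter_div_sqrt3_power_tendsto_0 sqrt2_div_exp1_power_tendsto_0)
  then have W: "W \<longlonglongrightarrow> 0"
    by simp
  have bound: "1 - W n \<le> measure (M n) (good_event n)" if "regular n" for n
  proof -
    have n: "n > 0"
      using that by (simp add: regular_def)
    have "real n * (eta n)\<^sup>2 = real n powr \<tau>"
      using n by (simp add: eta_sq powr_diff)
    moreover have "real (card (test_vectors n (p n) (X n) (thr n) (\<beta> n))) \<le> (2 + C * real n powr \<xi>) * real (p n)"
      using card_Cset_le by (intro card_test_vectors_le) auto
    ultimately have "1 - W n \<le> 1 - (real (card (test_vectors n (p n) (X n) (thr n) (\<beta> n)))
        * (2 * exp (- real n * (eta n)\<^sup>2 / (2 * \<sigma>\<^sup>2))) + (exp (1 / 4) / sqrt 3) ^ n + (sqrt 2 / exp 1) ^ n)"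
      unfolding W_def by (simp add: mult_right_mono)
    also have "\<dots> \<le> measure (M n) (good_event n)"
      using prob_space.prob_noise_typical(2)[of "M n" "\<epsilon> n" n \<sigma> "eta n" "test_vectors n (p n) (X n) (thr n) (\<beta> n)"]
        prob indep gauss sigma_pos finite_test_vectors n that
      by (simp add: good_event_def)
    finally show ?thesis .
  qed
  show ?thesis
  proof (rule tendsto_sandwich[of "\<lambda>n. 1 - W n" _ _ "\<lambda>n. 1"])
    show "eventually (\<lambda>n. 1 - W n \<le> measure (M n) (good_event n)) sequentially"
      using eventually_regular by eventually_elim (rule bound)
    show "eventually (\<lambda>n. measure (M n) (good_event n) \<le> 1) sequentially"
      using prob by (intro always_eventually allI prob_space.prob_le_1) auto
    show "(\<lambda>n. 1 - W n) \<longlonglongrightarrow> 1"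
      using tendsto_diff[OF tendsto_const W, of 1] by simp
  qed simp
qed

lemma tilted_bounds_on_good_event:
  fixes s :: rescale
  assumes "\<omega> \<in> good_event n"
  defines "T \<equiv> tilted s n (p n) (X n) (thr n) (resp n (p n) (X n) (\<beta> n) (\<epsilon> n \<omega>))"
  shows "\<And>k. k < p n \<Longrightarrow> k \<notin> S n \<Longrightarrow> \<bar>T k\<bar> / Min ((\<lambda>j. \<bar>T j\<bar>) ` S n) \<le> real n powr \<mu> * (Ub n + nu n + eta n)"
    and "\<And>k. k < p n \<Longrightarrow> k \<notin> S n \<Longrightarrow> real n powr \<mu> * \<bar>T k\<bar> \<le> real n powr \<mu> * (Ub n + nu n + eta n)"
    and "\<And>j. j \<in> S n \<Longrightarrow> real n powr \<mu> * Lmin n \<le> real n powr \<mu> * \<bar>T j\<bar>"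
    and "\<And>j. s = Lam \<Longrightarrow> j \<in> S n \<Longrightarrow> \<bar>T j / \<beta> n j - 1\<bar> \<le> real n powr \<mu> * (Ub n + nu n + eta n)"
proof -
  have reg: "regular n"
    using assms by (simp add: good_event_def)
  have td: "typical_design n (p n) (X n) (\<beta> n) (\<epsilon> n \<omega>) (thr n) (C2 * real n powr (-\<gamma>)) \<alpha> Mb
      (K1 * real n powr \<delta>) (C * real n powr \<xi>) (eta n) \<sigma> (real n powr \<kappa>)"
    using assms by (intro typical_design_if_regular) (simp_all add: good_event_def)
  have L: "0 < Lmin n" "1 \<le> real n powr \<mu> * Lmin n"
    using Lmin_pos[OF reg] reg by (simp_all add: regular_def)
  have div_le: "x / Lmin n \<le> real n powr \<mu> * x" if "x \<ge> 0" for x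
  proof -
    have "x * 1 \<le> x * (real n powr \<mu> * Lmin n)"
      using L(2) that by (rule mult_left_mono)
    then show ?thesis
      using L(1) by (simp add: pos_divide_le_eq mult_ac)
  qed
  have nonneg: "Ub n \<ge> 0" "nu n \<ge> 0" "eta n \<ge> 0"
    using Ub_nonneg nu_nonneg by simp_all
  have Ub_le: "real n powr \<mu> * Ub n \<le> real n powr \<mu> * (Ub n + nu n + eta n)"
    and nu_eta_le: "real n powr \<mu> * (nu n + eta n) \<le> real n powr \<mu> * (Ub n + nu n + eta n)"
    using nonneg by (simp_all add: mult_left_mono)
  show "\<bar>T k\<bar> / Min ((\<lambda>j. \<bar>T j\<bar>) ` S n) \<le> real n powr \<mu> * (Ub n + nu n + eta n)"
    if "k < p n" "k \<notin> S n" for k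
  proof -
    have "\<bar>T k\<bar> / Min ((\<lambda>j. \<bar>T j\<bar>) ` S n) \<le> Ub n / Lmin n"
      unfolding T_def by (rule typical_design.tilted_ratio_le[OF td that])
    also have "\<dots> \<le> real n powr \<mu> * Ub n"
      using nonneg(1) by (rule div_le)
    finally show ?thesis
      using Ub_le by linarith
  qed
  show "real n powr \<mu> * \<bar>T k\<bar> \<le> real n powr \<mu> * (Ub n + nu n + eta n)" if "k < p n" "k \<notin> S n" for k
    using typical_design.tilted_upper[OF td that, of s] Ub_le unfolding T_def
    by (meson mult_left_mono order_trans powr_ge_zero)
  show "real n powr \<mu> * Lmin n \<le> real n powr \<mu> * \<bar>T j\<bar>" if "j \<in> S n" for j
    using typical_design.tilted_lower[OF td that, of s] unfolding T_def by (simp add: mult_left_mono)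
  show "\<bar>T j / \<beta> n j - 1\<bar> \<le> real n powr \<mu> * (Ub n + nu n + eta n)" if "s = Lam" "j \<in> S n" for j
  proof -
    have "\<bar>T j / \<beta> n j - 1\<bar> \<le> (nu n + eta n) / (\<alpha> * bm n)"
      using typical_design.tilted_Lam_ratio[OF td that(2)] that(1) unfolding T_def by simp
    also have "\<dots> \<le> (nu n + eta n) / Lmin n"
    proof (rule divide_left_mono)
      show "Lmin n \<le> \<alpha> * bm n" "0 \<le> nu n + eta n"
        using nonneg by linarith+
      then show "0 < \<alpha> * bm n * Lmin n"
        using L(1) by simp
    qed
    also have "\<dots> \<le> real n powr \<mu> * (nu n + eta n)"
      using nonneg by (intro div_le) simp
    finally show ?thesis
      using nu_eta_le by linarith
  qed
qed

lemma screening_consistency: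
  "\<exists>E r R. (\<forall>n. E n \<in> sets (M n)) \<and> (\<lambda>n. measure (M n) (E n)) \<longlonglongrightarrow> 1 \<and>
     r \<longlonglongrightarrow> 0 \<and> filterlim R at_top sequentially \<and>
     (\<forall>n. \<forall>\<omega>\<in>E n.
        let T = tilted s n (p n) (X n) (C1 * real n powr (-\<gamma>))
                  (resp n (p n) (X n) (\<beta> n) (\<epsilon> n \<omega>));
            S = supp (p n) (\<beta> n)
        in (\<forall>k < p n. k \<notin> S \<longrightarrow>
               \<bar>T k\<bar> / Min ((\<lambda>j. \<bar>T j\<bar>) ` S) \<le> r n \<and>
               real n powr \<mu> * \<bar>T k\<bar> \<le> r n) \<and>
           (\<forall>j\<in>S. R n \<le> real n powr \<mu> * \<bar>T j\<bar>) \<and>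
           (s = Lam \<longrightarrow> (\<forall>j\<in>S. \<bar>T j / \<beta> n j - 1\<bar> \<le> r n)))"
proof -
  define r where "r n = real n powr \<mu> * (Ub n + nu n + eta n)" for n
  define R where "R n = real n powr \<mu> * Lmin n" for n
  have "r = (\<lambda>n. real n powr \<mu> * Ub n + real n powr \<mu> * (nu n + eta n))"
    by (rule ext) (simp only: r_def distrib_left add.assoc)
  then have "r \<longlonglongrightarrow> 0"
    using tendsto_add[OF powr_mu_Ub_tendsto_0 powr_mu_nu_eta_tendsto_0] by simp
  moreover have "filterlim R at_top sequentially"
    unfolding R_def by (rule powr_mu_Lmin_tendsto_at_top)
  moreover have "let T = tilted s n (p n) (X n) (C1 * real n powr (-\<gamma>)) (resp n (p n) (X n) (\<beta> n) (\<epsilon> n \<omega>));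
            S = supp (p n) (\<beta> n)
        in (\<forall>k < p n. k \<notin> S \<longrightarrow> \<bar>T k\<bar> / Min ((\<lambda>j. \<bar>T j\<bar>) ` S) \<le> r n \<and> real n powr \<mu> * \<bar>T k\<bar> \<le> r n) \<and>
           (\<forall>j\<in>S. R n \<le> real n powr \<mu> * \<bar>T j\<bar>) \<and>
           (s = Lam \<longrightarrow> (\<forall>j\<in>S. \<bar>T j / \<beta> n j - 1\<bar> \<le> r n))"
    if "\<omega> \<in> good_event n" for n \<omega>
    unfolding Let_def r_def R_def using tilted_bounds_on_good_event[where s = s, OF that] by blast
  ultimately show ?thesis
    using good_event_sets prob_good_event_tendsto_1 by blast
qed

end

lemma rate_exponents:
  fixes \<delta> \<gamma> \<theta> \<xi> \<mu> \<kappa> :: real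
  assumes "0 \<le> \<delta>" "0 \<le> \<xi>" "\<theta> < 1 - 2 * \<gamma>" "\<xi> < 2 * (\<gamma> - \<delta>)" "\<mu> < \<gamma> - \<delta> - \<xi> / 2"
    "\<kappa> / 2 + \<mu> < \<gamma> - \<delta> - \<xi> / 2"
  defines "\<tau> \<equiv> (\<theta> + 1 - 2 * \<gamma>) / 2"
  shows "\<theta> < \<tau>" "\<mu> + \<delta> - \<gamma> + max (\<kappa> / 2) 0 < 0" "\<mu> + (\<tau> - 1) / 2 + max (\<kappa> / 2) 0 < 0"
    "\<mu> + (\<tau> - 1) / 2 + \<delta> < 0" "\<xi> + \<tau> - 1 < 0"
  using assms by (auto simp: max_def field_simps)

theorem theorem1:
  fixes X :: "nat \<Rightarrow> nat \<Rightarrow> nat \<Rightarrow> real" and p :: "nat \<Rightarrow> nat"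
    and \<beta> :: "nat \<Rightarrow> nat \<Rightarrow> real" and \<sigma> :: real
    and M :: "nat \<Rightarrow> 'w measure" and \<epsilon> :: "nat \<Rightarrow> 'w \<Rightarrow> nat \<Rightarrow> real"
    and \<delta> \<gamma> \<theta> \<xi> \<mu> \<kappa> C1 C Mb \<alpha> C2 :: real
  assumes unit_cols: "\<forall>n j. j < p n \<longrightarrow> vinner n (col (X n) j) (col (X n) j) = 1"
    and sigma_pos: "\<sigma> > 0"
    and prob: "\<forall>n. prob_space (M n)"
    and indep: "\<forall>n. prob_space.indep_vars (M n) (\<lambda>_. borel) (\<lambda>i \<omega>. \<epsilon> n \<omega> i) {..<n}"
    and gauss: "\<forall>n i. i < n \<longrightarrow>
        distributed (M n) lborel (\<lambda>\<omega>. \<epsilon> n \<omega> i) (normal_density 0 (\<sigma> / sqrt (real n)))"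
    \<comment> \<open>(A1)\<close>
    and A1: "0 \<le> \<delta>" "\<delta> < 1/2"
      "(\<lambda>n. real (card (supp (p n) (\<beta> n)))) \<in> O(\<lambda>n. real n powr \<delta>)"
    \<comment> \<open>(A2)\<close>
    and A2: "\<delta> < \<gamma>" "\<gamma> < 1/2" "0 \<le> \<theta>" "\<theta> < 1 - 2 * \<gamma>"
      "(\<lambda>n. ln (real (p n))) \<in> O(\<lambda>n. real n powr \<theta>)"
    \<comment> \<open>(A3), with pi_n = C1 * n powr (-gamma)\<close>
    and A3: "C1 > 0" "C > 0" "0 \<le> \<xi>" "\<xi> < 2 * (\<gamma> - \<delta>)"
      "\<forall>n j. j < p n \<longrightarrow>
         real (card (Cset n (p n) (X n) (C1 * real n powr (-\<gamma>)) j)) \<le> C * real n powr \<xi>"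
    \<comment> \<open>(A4)\<close>
    and A4: "Mb > 0" "\<forall>n. \<forall>j\<in>supp (p n) (\<beta> n). \<bar>\<beta> n j\<bar> < Mb"
      "0 \<le> \<mu>" "\<mu> < \<gamma> - \<delta> - \<xi> / 2"
      "eventually (\<lambda>n. supp (p n) (\<beta> n) \<noteq> {}) sequentially"
      "filterlim (\<lambda>n. real n powr \<mu> * Min ((\<lambda>j. \<bar>\<beta> n j\<bar>) ` supp (p n) (\<beta> n)))
         at_top sequentially"
    \<comment> \<open>(A5)\<close>
    and A5: "0 < \<alpha>" "\<alpha> < 1"
      "\<forall>n j. j < p n \<longrightarrow> 1 - a_coef n (p n) (X n) (C1 * real n powr (-\<gamma>)) j > \<alpha>"
    \<comment> \<open>(A6), divergence uniform over the admissible j\<close>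
    and A6: "0 \<le> \<kappa> / 2 + \<mu>" "\<kappa> / 2 + \<mu> < \<gamma> - \<delta> - \<xi> / 2"
      "\<forall>B. eventually (\<lambda>n. \<forall>j < p n.
          \<not> supp (p n) (\<beta> n) \<subseteq> Cset n (p n) (X n) (C1 * real n powr (-\<gamma>)) j \<longrightarrow>
          B < real n powr \<kappa> *
            (vinner n (\<lambda>i. signal n (p n) (X n) (\<beta> n) i
                  - proj n (X n) (Cset n (p n) (X n) (C1 * real n powr (-\<gamma>)) j)
                      (signal n (p n) (X n) (\<beta> n)) i)
                (\<lambda>i. signal n (p n) (X n) (\<beta> n) i
                  - proj n (X n) (Cset n (p n) (X n) (C1 * real n powr (-\<gamma>)) j)
                      (signal n (p n) (X n) (\<beta> n)) i)
             / vinner n (signal n (p n) (X n) (\<beta> n)) (signal n (p n) (X n) (\<beta> n))))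
        sequentially"
    \<comment> \<open>additional condition\<close>
    and extra: "C2 > 0"
      "\<forall>n j k. j < p n \<longrightarrow>
          k \<in> supp (p n) (\<beta> n) - Cset n (p n) (X n) (C1 * real n powr (-\<gamma>)) j \<longrightarrow> k \<noteq> j \<longrightarrow>
          \<bar>vinner n (PiX n (p n) (X n) (C1 * real n powr (-\<gamma>)) j) (col (X n) k)\<bar>
            \<le> C2 * real n powr (-\<gamma>)"
  shows "\<forall>s :: rescale. \<exists>E r R.
     (\<forall>n. E n \<in> sets (M n)) \<and>
     (\<lambda>n. measure (M n) (E n)) \<longlonglongrightarrow> 1 \<and>
     r \<longlonglongrightarrow> 0 \<and> filterlim R at_top sequentially \<and>
     (\<forall>n. \<forall>\<omega>\<in>E n.
        let T = tilted s n (p n) (X n) (C1 * real n powr (-\<gamma>))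
                  (resp n (p n) (X n) (\<beta> n) (\<epsilon> n \<omega>));
            S = supp (p n) (\<beta> n)
        in (\<forall>k < p n. k \<notin> S \<longrightarrow>
               \<bar>T k\<bar> / Min ((\<lambda>j. \<bar>T j\<bar>) ` S) \<le> r n \<and>
               real n powr \<mu> * \<bar>T k\<bar> \<le> r n) \<and>
           (\<forall>j\<in>S. R n \<le> real n powr \<mu> * \<bar>T j\<bar>) \<and>
           (s = Lam \<longrightarrow> (\<forall>j\<in>S. \<bar>T j / \<beta> n j - 1\<bar> \<le> r n)))"
proof -
  obtain K1 where K1: "K1 > 0"
    "eventually (\<lambda>n. real (card (supp (p n) (\<beta> n))) \<le> K1 * real n powr \<delta>) sequentially"
    using A1(3) by (elim landau_o.bigE) auto
  obtain K2 where "eventually (\<lambda>n. \<bar>ln (real (p n))\<bar> \<le> K2 * real n powr \<theta>) sequentially"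
    using A2(5) by (elim landau_o.bigE) auto
  then have K2: "eventually (\<lambda>n. ln (real (p n)) \<le> K2 * real n powr \<theta>) sequentially"
    by eventually_elim simp
  define \<tau> where "\<tau> = (\<theta> + 1 - 2 * \<gamma>) / 2"
  note exps = rate_exponents[OF A1(1) A3(3) A2(4) A3(4) A4(4) A6(2), folded \<tau>_def]
  have "screening_model X p \<beta> \<sigma> M \<epsilon> \<delta> \<gamma> \<theta> \<xi> \<mu> \<kappa> \<tau> C1 C Mb \<alpha> C2 K1 K2"
    using unit_cols sigma_pos prob indep gauss A1(1) A2(3) A3 A4 A5 A6(3) extra exps K1 K2
    by unfold_locales (simp_all add: resid_sig_def)
  then show ?thesis
    by (intro allI screening_model.screening_consistency)
qed

end
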